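(* Let $\theta^{\mu\nu}=-\theta^{\nu\mu}$ be constant with $\theta^{0i}=0$, let $J^\mu$ be a prescribed smooth external current (not assumed conserved), and set $C:=\partial_\mu J^\mu$. Consider the Lagrangian $\mathcal L=\mathcal L_{\rm ws}+\mathcal L_J$ with $$\mathcal L_{\rm ws}=-\tfrac14F_{\mu\nu}F^{\mu\nu}+\tfrac18\theta^{\alpha\beta}F_{\alpha\beta}F_{\mu\nu}F^{\mu\nu}-\tfrac12\theta^{\alpha\beta}F_{\mu\alpha}F_{\nu\beta}F^{\mu\nu},$$ $$\mathcal L_J=-A_\mu J^\mu-\theta^{\mu\alpha}J^\beta A_\mu\partial_\alpha A_\beta+\tfrac12\theta^{\mu\alpha}J^\beta A_\mu\partial_\beta A_\alpha,$$ and let $\mathcal E_B^\nu:=\frac{\partial\mathcal L}{\partial A_\nu}-\partial_\mu\frac{\partial\mathcal L}{\partial(\partial_\mu A_\nu)}$ be its Euler--Lagrange expression. Let $\dot\phi_2:=\{\phi_2,H_c\}+\partial_t\phi_2\big|_{\rm expl}$, where $\phi_2$ is the secondary constraint, $H_c$ the canonical Hamiltonian, and $\partial_t\phi_2|_{\rm expl}=-\partial_0J^0+\tfrac12\theta^{kl}\partial_l(A_k\partial_0J^0)$ is the derivative with respect to the explicit time dependence carried by $J^\mu$. Then, to first order in $\theta$ (i.e. modulo $O(\theta^2)$), and after expressing the Lagrangian quantities in the canonical variables, one has the identity $$\partial_\nu\mathcal E_B^\nu=\dot\phi_2=\Phi_3^{\rm cand},$$ where $$\Phi_3^{\rm cand}:=-\partial_\mu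 J^\mu+\theta^{li}(\partial_iJ^0)\partial_lA_0+\theta^{li}\partial_i\bigl(J^k\partial_lA_k\bigr)-\tfrac12\theta^{il}\partial_i\bigl[A_l(\partial_\mu J^\mu)\bigr].$$ In particular all terms containing the momenta $\pi^k$ cancel in $\dot\phi_2$.
   Context: Minkowski space with metric $\eta^{\mu\nu}=\mathrm{diag}(+1,-1,-1,-1)$; Greek indices run over $0,1,2,3$, Latin indices over $1,2,3$; repeated indices are summed; $\partial_0=\partial_t$. $A_\mu$ is a smooth $U(1)$ gauge potential, $F_{\mu\nu}=\partial_\mu A_\nu-\partial_\nu A_\mu$. Canonical phase space: fields $A_\mu(x),\pi^\mu(x)$ at fixed time with $\{A_\mu(x),\pi^\nu(y)\}=\delta^\nu_\mu\delta^3(x-y)$ and all other basic brackets zero; for functionals, $\{F,G\}=\int d^3z\,\bigl[\frac{\delta F}{\delta A_k(z)}\frac{\delta G}{\delta\pi^k(z)}-\frac{\delta F}{\delta\pi^k(z)}\frac{\delta G}{\delta A_k(z)}\bigr]$ (plus the analogous $A_0,\pi^0$ terms). Spatial momenta: $\pi^i=\bigl[\tfrac12F_{kl}\theta^{kl}-1\bigr]F^{0i}+F^{0j}F_{jk}\theta^{ki}+F^{0m}F_{kj}\eta_{lm}\eta^{ji}\theta^{lk}+\tfrac12\theta^{ji}A_jJ^0$, and $\pi^0\approx0$ is the primary constraint $\phi_1$. Secondary constraint: $\phi_2=\partial_i\pi^i-J^0+\tfrac12\theta^{kl}\partial_l(A_kJ^0)$. Canonical Hamiltonian $H_c=\int d^3x(\mathcal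 H_{\rm ws}+\mathcal H_J)$ with $\mathcal H_{\rm ws}=\pi_i\partial^iA_0+\tfrac14F_{ij}F^{ij}[1-\tfrac12F_{ml}\theta^{ml}]-\tfrac12\eta_{00}\eta_{ij}\pi^i\pi^j[1+\tfrac12F_{ml}\theta^{ml}]+\tfrac12F^{ip}F_{li}F_{pm}\theta^{ml}-F_{li}\eta_{00}\eta_{mj}\pi^i\pi^j\theta^{ml}$ and $\mathcal H_J=A_0J^0+A_jJ^j+\tfrac12\theta^{jl}[A_jJ^0\partial_lA_0+A_jJ^k\partial_lA_k+A_jJ^0\eta_{00}\eta_{li}\pi^i-A_jF_{kl}J^k]$. *)

theory Defs
  imports "HOL-Analysis.Analysis" "HOL-Library.Numeral_Type" "HOL-Library.Landau_Symbols"
begin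

text \<open>Spacetime points are vectors in real^4; indices are elements of the
  numeral type 4 = {0,1,2,3}; index 0 is time, the spatial indices are 1,2,3.\<close>

definition spat :: "4 set" where "spat = UNIV - {0}"

definition eta :: "4 \<Rightarrow> 4 \<Rightarrow> real" where
  "eta \<mu> \<nu> = (if \<mu> \<noteq> \<nu> then 0 else if \<mu> = 0 then 1 else -1)"

definition pdx :: "4 \<Rightarrow> (real^4 \<Rightarrow> real) \<Rightarrow> real^4 \<Rightarrow> real" where
  "pdx \<mu> f x = deriv (\<lambda>s. f (x + s *\<^sub>R axis \<mu> 1)) 0"

fun iterpd :: "4 list \<Rightarrow> (real^4 \<Rightarrow> real) \<Rightarrow> real^4 \<Rightarrow> real" where
  "iterpd [] f = f"
| "iterpd (\<mu> # ks) f = pdx \<mu> (iterpd ks f)"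

definition smooth4 :: "(real^4 \<Rightarrow> real) \<Rightarrow> bool" where
  "smooth4 f \<longleftrightarrow> (\<forall>ks x. iterpd ks f differentiable (at x))"

definition pdj :: "(('v \<Rightarrow> real) \<Rightarrow> real) \<Rightarrow> ('v \<Rightarrow> real) \<Rightarrow> 'v \<Rightarrow> real" where
  "pdj g p i = deriv (\<lambda>s. g (p(i := s))) (p i)"

definition scale_theta :: "real \<Rightarrow> (4 \<Rightarrow> 4 \<Rightarrow> real) \<Rightarrow> 4 \<Rightarrow> 4 \<Rightarrow> real" where
  "scale_theta \<epsilon> \<Theta> = (\<lambda>\<mu> \<nu>. \<epsilon> * \<Theta> \<mu> \<nu>)"

text \<open>Lagrangian jet variables: LA mu = A_mu, LdA mu nu = d_mu A_nu.\<close>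
datatype lvar = LA "4" | LdA "4" "4"

definition Fl :: "(lvar \<Rightarrow> real) \<Rightarrow> 4 \<Rightarrow> 4 \<Rightarrow> real" where
  "Fl p \<mu> \<nu> = p (LdA \<mu> \<nu>) - p (LdA \<nu> \<mu>)"

definition Flup :: "(lvar \<Rightarrow> real) \<Rightarrow> 4 \<Rightarrow> 4 \<Rightarrow> real" where
  "Flup p \<mu> \<nu> = (\<Sum>\<alpha>\<in>UNIV. \<Sum>\<beta>\<in>UNIV. eta \<mu> \<alpha> * eta \<nu> \<beta> * Fl p \<alpha> \<beta>)"

definition Lws :: "(4 \<Rightarrow> 4 \<Rightarrow> real) \<Rightarrow> (lvar \<Rightarrow> real) \<Rightarrow> real" where
  "Lws \<theta> p =
     - (1/4) * (\<Sum>\<mu>\<in>UNIV. \<Sum>\<nu>\<in>UNIV. Fl p \<mu> \<nu> * Flup p \<mu> \<nu>)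
     + (1/8) * (\<Sum>\<alpha>\<in>UNIV. \<Sum>\<beta>\<in>UNIV. \<theta> \<alpha> \<beta> * Fl p \<alpha> \<beta>)
             * (\<Sum>\<mu>\<in>UNIV. \<Sum>\<nu>\<in>UNIV. Fl p \<mu> \<nu> * Flup p \<mu> \<nu>)
     - (1/2) * (\<Sum>\<alpha>\<in>UNIV. \<Sum>\<beta>\<in>UNIV. \<Sum>\<mu>\<in>UNIV. \<Sum>\<nu>\<in>UNIV.
                 \<theta> \<alpha> \<beta> * Fl p \<mu> \<alpha> * Fl p \<nu> \<beta> * Flup p \<mu> \<nu>)"

text \<open>Jx mu = J^mu at the point under consideration.\<close>
definition LJ :: "(4 \<Rightarrow> 4 \<Rightarrow> real) \<Rightarrow> (4 \<Rightarrow> real) \<Rightarrow> (lvar \<Rightarrow> real) \<Rightarrow> real" where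
  "LJ \<theta> Jx p =
     - (\<Sum>\<mu>\<in>UNIV. p (LA \<mu>) * Jx \<mu>)
     - (\<Sum>\<mu>\<in>UNIV. \<Sum>\<alpha>\<in>UNIV. \<Sum>\<beta>\<in>UNIV. \<theta> \<mu> \<alpha> * Jx \<beta> * p (LA \<mu>) * p (LdA \<alpha> \<beta>))
     + (1/2) * (\<Sum>\<mu>\<in>UNIV. \<Sum>\<alpha>\<in>UNIV. \<Sum>\<beta>\<in>UNIV. \<theta> \<mu> \<alpha> * Jx \<beta> * p (LA \<mu>) * p (LdA \<beta> \<alpha>))"

definition Lag :: "(4 \<Rightarrow> 4 \<Rightarrow> real) \<Rightarrow> (4 \<Rightarrow> real^4 \<Rightarrow> real) \<Rightarrow> real^4 \<Rightarrow> (lvar \<Rightarrow> real) \<Rightarrow> real" where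
  "Lag \<theta> J x p = Lws \<theta> p + LJ \<theta> (\<lambda>\<mu>. J \<mu> x) p"

definition ljet :: "(4 \<Rightarrow> real^4 \<Rightarrow> real) \<Rightarrow> real^4 \<Rightarrow> lvar \<Rightarrow> real" where
  "ljet A x v = (case v of LA \<mu> \<Rightarrow> A \<mu> x | LdA \<mu> \<nu> \<Rightarrow> pdx \<mu> (A \<nu>) x)"

definition EB :: "(4 \<Rightarrow> 4 \<Rightarrow> real) \<Rightarrow> (4 \<Rightarrow> real^4 \<Rightarrow> real) \<Rightarrow> (4 \<Rightarrow> real^4 \<Rightarrow> real) \<Rightarrow> 4 \<Rightarrow> real^4 \<Rightarrow> real" where
  "EB \<theta> A J \<nu> x = pdj (Lag \<theta> J x) (ljet A x) (LA \<nu>)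
     - (\<Sum>\<mu>\<in>UNIV. pdx \<mu> (\<lambda>y. pdj (Lag \<theta> J y) (ljet A y) (LdA \<mu> \<nu>)) x)"

definition divEB :: "(4 \<Rightarrow> 4 \<Rightarrow> real) \<Rightarrow> (4 \<Rightarrow> real^4 \<Rightarrow> real) \<Rightarrow> (4 \<Rightarrow> real^4 \<Rightarrow> real) \<Rightarrow> real^4 \<Rightarrow> real" where
  "divEB \<theta> A J x = (\<Sum>\<nu>\<in>UNIV. pdx \<nu> (EB \<theta> A J \<nu>) x)"

text \<open>Canonical jet variables: CA mu = A_mu, CdA j mu = d_j A_mu, CP mu = pi^mu,
  CdP j mu = d_j pi^mu (only spatial j are used).\<close>
datatype cvar = CA "4" | CdA "4" "4" | CP "4" | CdP "4" "4"

definition Fc :: "(cvar \<Rightarrow> real) \<Rightarrow> 4 \<Rightarrow> 4 \<Rightarrow> real" where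
  "Fc q k l = q (CdA k l) - q (CdA l k)"

definition Fcup :: "(cvar \<Rightarrow> real) \<Rightarrow> 4 \<Rightarrow> 4 \<Rightarrow> real" where
  "Fcup q k l = (\<Sum>a\<in>spat. \<Sum>b\<in>spat. eta k a * eta l b * Fc q a b)"

definition Hws :: "(4 \<Rightarrow> 4 \<Rightarrow> real) \<Rightarrow> (cvar \<Rightarrow> real) \<Rightarrow> real" where
  "Hws \<theta> q =
     (\<Sum>i\<in>spat. (\<Sum>j\<in>spat. eta i j * q (CP j)) * (\<Sum>j\<in>spat. eta i j * q (CdA j 0)))
   + (1/4) * (\<Sum>i\<in>spat. \<Sum>j\<in>spat. Fc q i j * Fcup q i j)
       * (1 - (1/2) * (\<Sum>m\<in>spat. \<Sum>l\<in>spat. Fc q m l * \<theta> m l))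
   - (1/2) * eta 0 0 * (\<Sum>i\<in>spat. \<Sum>j\<in>spat. eta i j * q (CP i) * q (CP j))
       * (1 + (1/2) * (\<Sum>m\<in>spat. \<Sum>l\<in>spat. Fc q m l * \<theta> m l))
   + (1/2) * (\<Sum>i\<in>spat. \<Sum>p\<in>spat. \<Sum>l\<in>spat. \<Sum>m\<in>spat.
                Fcup q i p * Fc q l i * Fc q p m * \<theta> m l)
   - (\<Sum>l\<in>spat. \<Sum>i\<in>spat. \<Sum>m\<in>spat. \<Sum>j\<in>spat.
        Fc q l i * eta 0 0 * eta m j * q (CP i) * q (CP j) * \<theta> m l)"

definition HJ :: "(4 \<Rightarrow> 4 \<Rightarrow> real) \<Rightarrow> (4 \<Rightarrow> real) \<Rightarrow> (cvar \<Rightarrow> real) \<Rightarrow> real" where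
  "HJ \<theta> Jx q =
     q (CA 0) * Jx 0 + (\<Sum>j\<in>spat. q (CA j) * Jx j)
   + (1/2) * (\<Sum>j\<in>spat. \<Sum>l\<in>spat. \<theta> j l *
        ( q (CA j) * Jx 0 * q (CdA l 0)
        + (\<Sum>k\<in>spat. q (CA j) * Jx k * q (CdA l k))
        + q (CA j) * Jx 0 * eta 0 0 * (\<Sum>i\<in>spat. eta l i * q (CP i))
        - (\<Sum>k\<in>spat. q (CA j) * Fc q k l * Jx k)))"

definition Ham :: "(4 \<Rightarrow> 4 \<Rightarrow> real) \<Rightarrow> (4 \<Rightarrow> real^4 \<Rightarrow> real) \<Rightarrow> real^4 \<Rightarrow> (cvar \<Rightarrow> real) \<Rightarrow> real" where
  "Ham \<theta> J x q = Hws \<theta> q + HJ \<theta> (\<lambda>\<mu>. J \<mu> x) q"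

definition phi2 :: "(4 \<Rightarrow> 4 \<Rightarrow> real) \<Rightarrow> (4 \<Rightarrow> real^4 \<Rightarrow> real) \<Rightarrow> real^4 \<Rightarrow> (cvar \<Rightarrow> real) \<Rightarrow> real" where
  "phi2 \<theta> J x q = (\<Sum>i\<in>spat. q (CdP i i)) - J 0 x
     + (1/2) * (\<Sum>k\<in>spat. \<Sum>l\<in>spat. \<theta> k l *
          (q (CdA l k) * J 0 x + q (CA k) * pdx l (J 0) x))"

definition Ff :: "(4 \<Rightarrow> real^4 \<Rightarrow> real) \<Rightarrow> 4 \<Rightarrow> 4 \<Rightarrow> real^4 \<Rightarrow> real" where
  "Ff A \<mu> \<nu> x = pdx \<mu> (A \<nu>) x - pdx \<nu> (A \<mu>) x"

definition Ffup :: "(4 \<Rightarrow> real^4 \<Rightarrow> real) \<Rightarrow> 4 \<Rightarrow> 4 \<Rightarrow> real^4 \<Rightarrow> real" where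
  "Ffup A \<mu> \<nu> x = (\<Sum>\<alpha>\<in>UNIV. \<Sum>\<beta>\<in>UNIV. eta \<mu> \<alpha> * eta \<nu> \<beta> * Ff A \<alpha> \<beta> x)"

text \<open>pi^0 = 0 (primary constraint); spatial pi^i given by the stated formula.\<close>
definition piF :: "(4 \<Rightarrow> 4 \<Rightarrow> real) \<Rightarrow> (4 \<Rightarrow> real^4 \<Rightarrow> real) \<Rightarrow> (4 \<Rightarrow> real^4 \<Rightarrow> real) \<Rightarrow> 4 \<Rightarrow> real^4 \<Rightarrow> real" where
  "piF \<theta> A J i x = (if i = 0 then 0 else
      ((1/2) * (\<Sum>k\<in>spat. \<Sum>l\<in>spat. Ff A k l x * \<theta> k l) - 1) * Ffup A 0 i x
    + (\<Sum>j\<in>spat. \<Sum>k\<in>spat. Ffup A 0 j x * Ff A j k x * \<theta> k i)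
    + (\<Sum>m\<in>spat. \<Sum>k\<in>spat. \<Sum>j\<in>spat. \<Sum>l\<in>spat.
         Ffup A 0 m x * Ff A k j x * eta l m * eta j i * \<theta> l k)
    + (1/2) * (\<Sum>j\<in>spat. \<theta> j i * A j x * J 0 x))"

definition cjet :: "(4 \<Rightarrow> 4 \<Rightarrow> real) \<Rightarrow> (4 \<Rightarrow> real^4 \<Rightarrow> real) \<Rightarrow> (4 \<Rightarrow> real^4 \<Rightarrow> real) \<Rightarrow> real^4 \<Rightarrow> cvar \<Rightarrow> real" where
  "cjet \<theta> A J x v = (case v of
      CA \<mu> \<Rightarrow> A \<mu> x
    | CdA j \<mu> \<Rightarrow> pdx j (A \<mu>) x
    | CP \<mu> \<Rightarrow> piF \<theta> A J \<mu> x
    | CdP j \<mu> \<Rightarrow> pdx j (piF \<theta> A J \<mu>) x)"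

text \<open>Variational derivatives of H_c = integral of Ham over space.\<close>
definition dHdA :: "(4 \<Rightarrow> 4 \<Rightarrow> real) \<Rightarrow> (4 \<Rightarrow> real^4 \<Rightarrow> real) \<Rightarrow> (4 \<Rightarrow> real^4 \<Rightarrow> real) \<Rightarrow> 4 \<Rightarrow> real^4 \<Rightarrow> real" where
  "dHdA \<theta> A J \<mu> x = pdj (Ham \<theta> J x) (cjet \<theta> A J x) (CA \<mu>)
     - (\<Sum>j\<in>spat. pdx j (\<lambda>y. pdj (Ham \<theta> J y) (cjet \<theta> A J y) (CdA j \<mu>)) x)"

definition dHdP :: "(4 \<Rightarrow> 4 \<Rightarrow> real) \<Rightarrow> (4 \<Rightarrow> real^4 \<Rightarrow> real) \<Rightarrow> (4 \<Rightarrow> real^4 \<Rightarrow> real) \<Rightarrow> 4 \<Rightarrow> real^4 \<Rightarrow> real" where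
  "dHdP \<theta> A J \<mu> x = pdj (Ham \<theta> J x) (cjet \<theta> A J x) (CP \<mu>)
     - (\<Sum>j\<in>spat. pdx j (\<lambda>y. pdj (Ham \<theta> J y) (cjet \<theta> A J y) (CdP j \<mu>)) x)"

definition PB_phi2_H :: "(4 \<Rightarrow> 4 \<Rightarrow> real) \<Rightarrow> (4 \<Rightarrow> real^4 \<Rightarrow> real) \<Rightarrow> (4 \<Rightarrow> real^4 \<Rightarrow> real) \<Rightarrow> real^4 \<Rightarrow> real" where
  "PB_phi2_H \<theta> A J x = (\<Sum>\<mu>\<in>UNIV.
       pdj (phi2 \<theta> J x) (cjet \<theta> A J x) (CA \<mu>) * dHdP \<theta> A J \<mu> x
     + (\<Sum>j\<in>spat. pdj (phi2 \<theta> J x) (cjet \<theta> A J x) (CdA j \<mu>) * pdx j (dHdP \<theta> A J \<mu>) x)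
     - pdj (phi2 \<theta> J x) (cjet \<theta> A J x) (CP \<mu>) * dHdA \<theta> A J \<mu> x
     - (\<Sum>j\<in>spat. pdj (phi2 \<theta> J x) (cjet \<theta> A J x) (CdP j \<mu>) * pdx j (dHdA \<theta> A J \<mu>) x))"

definition phi2_expl :: "(4 \<Rightarrow> 4 \<Rightarrow> real) \<Rightarrow> (4 \<Rightarrow> real^4 \<Rightarrow> real) \<Rightarrow> (4 \<Rightarrow> real^4 \<Rightarrow> real) \<Rightarrow> real^4 \<Rightarrow> real" where
  "phi2_expl \<theta> A J x = - pdx 0 (J 0) x
     + (1/2) * (\<Sum>k\<in>spat. \<Sum>l\<in>spat. \<theta> k l * pdx l (\<lambda>y. A k y * pdx 0 (J 0) y) x)"

definition phi2_dot :: "(4 \<Rightarrow> 4 \<Rightarrow> real) \<Rightarrow> (4 \<Rightarrow> real^4 \<Rightarrow> real) \<Rightarrow> (4 \<Rightarrow> real^4 \<Rightarrow> real) \<Rightarrow> real^4 \<Rightarrow> real" where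
  "phi2_dot \<theta> A J x = PB_phi2_H \<theta> A J x + phi2_expl \<theta> A J x"

definition divJ :: "(4 \<Rightarrow> real^4 \<Rightarrow> real) \<Rightarrow> real^4 \<Rightarrow> real" where
  "divJ J y = (\<Sum>\<mu>\<in>UNIV. pdx \<mu> (J \<mu>) y)"

definition Phi3cand :: "(4 \<Rightarrow> 4 \<Rightarrow> real) \<Rightarrow> (4 \<Rightarrow> real^4 \<Rightarrow> real) \<Rightarrow> (4 \<Rightarrow> real^4 \<Rightarrow> real) \<Rightarrow> real^4 \<Rightarrow> real" where
  "Phi3cand \<theta> A J x = - divJ J x
     + (\<Sum>l\<in>spat. \<Sum>i\<in>spat. \<theta> l i * pdx i (J 0) x * pdx l (A 0) x)
     + (\<Sum>l\<in>spat. \<Sum>i\<in>spat. \<theta> l i * pdx i (\<lambda>y. \<Sum>k\<in>spat. J k y * pdx l (A k) y) x)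
     - (1/2) * (\<Sum>i\<in>spat. \<Sum>l\<in>spat. \<theta> i l * pdx i (\<lambda>y. A l y * divJ J y) x)"

end

theory Submission
  imports Defs
begin

(*
  On the Lagrangian side L_ws depends on A only through F, so the derivative of L_ws with
  respect to d_mu A_nu is antisymmetric in (mu, nu) and its double divergence vanishes by the
  symmetry of mixed partial derivatives; what remains is the divergence of the Euler-Lagrange
  expression of L_J, which is linear in theta and equals Phi_3 exactly.

  On the canonical side the same antisymmetry removes H_ws from d_i (dH/dA_i). Writing
  theta = eps * Theta, one has dH/dpi^k = d_0 A_k + O(eps) and
  dH_J/dA_i = J^i + (its part linear in theta, with pi^m replaced by F_0m) + O(eps^2);
  substituting these into the bracket {phi_2, H_c}, adding the explicit time derivative and
  expanding gives Phi_3 up to eps^2 times a remainder. Every quantity involved is a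
  polynomial in eps whose coefficients are smooth functions of the spacetime point, so the
  remainder is continuous in eps, which gives the O(eps^2) bounds.
*)

lemma UNIV_4_eq: "(UNIV :: 4 set) = {0, 1, 2, 3}"
proof -
  have "(4 :: 4) = 0" by simp
  with UNIV_4 show ?thesis by (simp add: insert_commute)
qed

lemma sum_UNIV_4: "(\<Sum>i\<in>UNIV. f i) = f (0 :: 4) + f 1 + f 2 + f 3"
  by (subst UNIV_4_eq) (simp add: add.assoc)

lemma spat_eq: "spat = {1, 2, 3}"
  unfolding spat_def UNIV_4_eq by auto

lemma sum_spat: "(\<Sum>i\<in>spat. f i) = f (1 :: 4) + f 2 + f 3"
  by (simp add: spat_eq add.assoc)

lemma has_derivative_imp_line_derivative:
  assumes "(f has_derivative f') (at (z + t *\<^sub>R axis \<mu> 1))"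
  shows "((\<lambda>s. f (z + s *\<^sub>R axis \<mu> 1)) has_real_derivative f' (axis \<mu> 1)) (at t)"
proof -
  have "((\<lambda>s. z + s *\<^sub>R axis \<mu> 1) has_derivative (\<lambda>s. s *\<^sub>R axis \<mu> 1)) (at t)"
    by (auto intro!: derivative_eq_intros)
  from has_derivative_compose[OF this assms]
  have "((\<lambda>s. f (z + s *\<^sub>R axis \<mu> 1)) has_derivative (\<lambda>s. f' (s *\<^sub>R axis \<mu> 1))) (at t)"
    by (simp add: o_def)
  moreover have "(\<lambda>s. f' (s *\<^sub>R axis \<mu> 1)) = (\<lambda>s. f' (axis \<mu> 1) * s)"
    using linear_scale[OF has_derivative_linear[OF assms]] by (auto simp: mult.commute)
  ultimately show ?thesis by (simp add: has_field_derivative_def)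
qed

lemma pdx_eq_has_derivative:
  assumes "(f has_derivative f') (at x)"
  shows "pdx \<mu> f x = f' (axis \<mu> 1)"
  unfolding pdx_def
  by (rule DERIV_imp_deriv, rule has_derivative_imp_line_derivative) (use assms in simp)

lemma has_real_derivative_pdx_line:
  assumes "f differentiable (at (z + t *\<^sub>R axis \<mu> 1))"
  shows "((\<lambda>s. f (z + s *\<^sub>R axis \<mu> 1)) has_real_derivative pdx \<mu> f (z + t *\<^sub>R axis \<mu> 1)) (at t)"
proof -
  obtain f' where "(f has_derivative f') (at (z + t *\<^sub>R axis \<mu> 1))"
    using assms unfolding differentiable_def by blast
  with has_derivative_imp_line_derivative pdx_eq_has_derivative show ?thesis by metis
qed

lemma pdx_add_at:
  assumes "f differentiable (at x)" "g differentiable (at x)"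
  shows "pdx \<mu> (\<lambda>y. f y + g y) x = pdx \<mu> f x + pdx \<mu> g x"
proof -
  obtain f' g' where f': "(f has_derivative f') (at x)" and g': "(g has_derivative g') (at x)"
    using assms unfolding differentiable_def by blast
  show ?thesis
    using pdx_eq_has_derivative[OF has_derivative_add[OF f' g']]
      pdx_eq_has_derivative[OF f'] pdx_eq_has_derivative[OF g'] by simp
qed

lemma pdx_mult_at:
  assumes "f differentiable (at x)" "g differentiable (at x)"
  shows "pdx \<mu> (\<lambda>y. f y * g y) x = pdx \<mu> f x * g x + f x * pdx \<mu> g x"
proof -
  obtain f' g' where f': "(f has_derivative f') (at x)" and g': "(g has_derivative g') (at x)"
    using assms unfolding differentiable_def by blast
  show ?thesis
    using pdx_eq_has_derivative[OF has_derivative_mult[OF f' g']]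
      pdx_eq_has_derivative[OF f'] pdx_eq_has_derivative[OF g'] by simp
qed

lemma pdx_const: "pdx \<mu> (\<lambda>y. c) = (\<lambda>y. 0)"
  using pdx_eq_has_derivative[OF has_derivative_const] by auto

lemma iterpd_append: "iterpd (ks @ [\<mu>]) f = iterpd ks (pdx \<mu> f)"
  by (induction ks) auto

definition differentiable_upto :: "nat \<Rightarrow> (real^4 \<Rightarrow> real) \<Rightarrow> bool" where
  "differentiable_upto n f \<longleftrightarrow> (\<forall>ks x. length ks \<le> n \<longrightarrow> iterpd ks f differentiable (at x))"

lemma smooth4_iff_differentiable_upto: "smooth4 f \<longleftrightarrow> (\<forall>n. differentiable_upto n f)"
  unfolding smooth4_def differentiable_upto_def by blast

lemma differentiable_upto_imp_differentiable:
  "differentiable_upto n f \<Longrightarrow> f differentiable (at x)"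
  unfolding differentiable_upto_def by (metis iterpd.simps(1) list.size(3) zero_le)

lemma differentiable_upto_Suc:
  "differentiable_upto (Suc n) f \<longleftrightarrow>
     (\<forall>x. f differentiable (at x)) \<and> (\<forall>\<mu>. differentiable_upto n (pdx \<mu> f))"
proof -
  have "iterpd ks f differentiable (at x)"
    if "\<forall>x. f differentiable (at x)" "\<forall>\<mu>. differentiable_upto n (pdx \<mu> f)"
      and "length ks \<le> Suc n" for ks x
    using that
    by (cases ks rule: rev_cases) (auto simp: differentiable_upto_def iterpd_append)
  then show ?thesis
    unfolding differentiable_upto_def
    by (metis iterpd.simps(1) iterpd_append le0 length_append_singleton list.size(3) Suc_le_mono)
qed

lemma differentiable_upto_add:
  "differentiable_upto n f \<Longrightarrow> differentiable_upto n g \<Longrightarrow> differentiable_upto n (\<lambda>y. f y + g y)"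
proof (induction n arbitrary: f g)
  case 0
  then show ?case
    by (auto simp: differentiable_upto_def intro: differentiable_upto_imp_differentiable)
next
  case (Suc n)
  have "pdx \<mu> (\<lambda>y. f y + g y) = (\<lambda>y. pdx \<mu> f y + pdx \<mu> g y)" for \<mu>
    using Suc.prems by (intro ext pdx_add_at differentiable_upto_imp_differentiable)
  moreover have "(\<lambda>y. f y + g y) differentiable (at x)" for x
    using Suc.prems by (intro differentiable_add differentiable_upto_imp_differentiable)
  moreover have "differentiable_upto n (\<lambda>y. pdx \<mu> f y + pdx \<mu> g y)" for \<mu>
    using Suc.prems by (intro Suc.IH) (simp_all add: differentiable_upto_Suc)
  ultimately show ?case
    by (simp add: differentiable_upto_Suc)
qed

lemma differentiable_upto_mono:
  "differentiable_upto (Suc n) f \<Longrightarrow> differentiable_upto n f"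
  unfolding differentiable_upto_def by simp

lemma differentiable_upto_mult:
  "differentiable_upto n f \<Longrightarrow> differentiable_upto n g \<Longrightarrow> differentiable_upto n (\<lambda>y. f y * g y)"
proof (induction n arbitrary: f g)
  case 0
  then show ?case
    by (auto simp: differentiable_upto_def intro: differentiable_upto_imp_differentiable)
next
  case (Suc n)
  have "pdx \<mu> (\<lambda>y. f y * g y) = (\<lambda>y. pdx \<mu> f y * g y + f y * pdx \<mu> g y)" for \<mu>
    using Suc.prems by (intro ext pdx_mult_at differentiable_upto_imp_differentiable)
  moreover have "differentiable_upto n (\<lambda>y. pdx \<mu> f y * g y + f y * pdx \<mu> g y)" for \<mu>
  proof -
    have "differentiable_upto n (pdx \<mu> f)" "differentiable_upto n (pdx \<mu> g)"
      using Suc.prems by (simp_all add: differentiable_upto_Suc)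
    moreover have "differentiable_upto n f" "differentiable_upto n g"
      using Suc.prems by (auto intro: differentiable_upto_mono)
    ultimately show ?thesis by (intro differentiable_upto_add Suc.IH)
  qed
  moreover have "(\<lambda>y. f y * g y) differentiable (at x)" for x
    using Suc.prems by (intro differentiable_mult differentiable_upto_imp_differentiable)
  ultimately show ?case
    by (simp add: differentiable_upto_Suc)
qed

lemma smooth4_add: "smooth4 f \<Longrightarrow> smooth4 g \<Longrightarrow> smooth4 (\<lambda>y. f y + g y)"
  by (simp add: smooth4_iff_differentiable_upto differentiable_upto_add)

lemma smooth4_mult: "smooth4 f \<Longrightarrow> smooth4 g \<Longrightarrow> smooth4 (\<lambda>y. f y * g y)"
  by (simp add: smooth4_iff_differentiable_upto differentiable_upto_mult)

lemma smooth4_imp_differentiable: "smooth4 f \<Longrightarrow> f differentiable (at x)"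
  unfolding smooth4_def by (metis iterpd.simps(1))

lemma smooth4_pdx: "smooth4 f \<Longrightarrow> smooth4 (pdx \<mu> f)"
  unfolding smooth4_def by (metis iterpd_append)

lemma smooth4_const: "smooth4 (\<lambda>y. c)"
proof -
  have "differentiable_upto n (\<lambda>y. c)" for n c
  proof (induction n arbitrary: c)
    case 0
    then show ?case by (simp add: differentiable_upto_def)
  next
    case (Suc n)
    then show ?case by (simp add: differentiable_upto_Suc pdx_const)
  qed
  then show ?thesis by (simp add: smooth4_iff_differentiable_upto)
qed

lemma smooth4_cmult: "smooth4 f \<Longrightarrow> smooth4 (\<lambda>y. c * f y)"
  using smooth4_mult[OF smooth4_const] .

lemma smooth4_minus: "smooth4 f \<Longrightarrow> smooth4 (\<lambda>y. - f y)"
  using smooth4_cmult[of f "-1"] by simp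

lemma smooth4_diff: "smooth4 f \<Longrightarrow> smooth4 g \<Longrightarrow> smooth4 (\<lambda>y. f y - g y)"
  using smooth4_add[OF _ smooth4_minus] by simp

lemma smooth4_divide_const: "smooth4 f \<Longrightarrow> smooth4 (\<lambda>y. f y / c)"
  using smooth4_cmult[of f "1 / c"] by simp

lemma smooth4_sum:
  "finite I \<Longrightarrow> (\<And>i. i \<in> I \<Longrightarrow> smooth4 (f i)) \<Longrightarrow> smooth4 (\<lambda>y. \<Sum>i\<in>I. f i y)"
  by (induction I rule: finite_induct) (auto simp: smooth4_const intro!: smooth4_add)

lemma pdx_add: "smooth4 f \<Longrightarrow> smooth4 g \<Longrightarrow> pdx \<mu> (\<lambda>y. f y + g y) = (\<lambda>y. pdx \<mu> f y + pdx \<mu> g y)"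
  by (intro ext pdx_add_at smooth4_imp_differentiable)

lemma pdx_mult:
  "smooth4 f \<Longrightarrow> smooth4 g \<Longrightarrow> pdx \<mu> (\<lambda>y. f y * g y) = (\<lambda>y. pdx \<mu> f y * g y + f y * pdx \<mu> g y)"
  by (intro ext pdx_mult_at smooth4_imp_differentiable)

lemma pdx_cmult: "smooth4 f \<Longrightarrow> pdx \<mu> (\<lambda>y. c * f y) = (\<lambda>y. c * pdx \<mu> f y)"
  using pdx_mult[OF smooth4_const, of f \<mu> c] by (simp add: pdx_const)

lemma pdx_minus: "smooth4 f \<Longrightarrow> pdx \<mu> (\<lambda>y. - f y) = (\<lambda>y. - pdx \<mu> f y)"
  using pdx_cmult[of f \<mu> "-1"] by simp

lemma pdx_diff: "smooth4 f \<Longrightarrow> smooth4 g \<Longrightarrow> pdx \<mu> (\<lambda>y. f y - g y) = (\<lambda>y. pdx \<mu> f y - pdx \<mu> g y)"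
  using pdx_add[OF _ smooth4_minus, of f g \<mu>] pdx_minus[of g \<mu>] by simp

lemma pdx_divide_const: "smooth4 f \<Longrightarrow> pdx \<mu> (\<lambda>y. f y / c) = (\<lambda>y. pdx \<mu> f y / c)"
  using pdx_cmult[of f \<mu> "1 / c"] by simp

lemma pdx_sum:
  "finite I \<Longrightarrow> (\<And>i. i \<in> I \<Longrightarrow> smooth4 (f i)) \<Longrightarrow>
    pdx \<mu> (\<lambda>y. \<Sum>i\<in>I. f i y) = (\<lambda>y. \<Sum>i\<in>I. pdx \<mu> (f i) y)"
  by (induction I rule: finite_induct) (auto simp: pdx_const pdx_add smooth4_sum)

lemmas pdx_simps = pdx_divide_const pdx_add pdx_mult pdx_diff pdx_minus pdx_const
lemmas smooth4_simps = smooth4_divide_const smooth4_add smooth4_mult smooth4_diff smooth4_minus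
  smooth4_const smooth4_pdx

section \<open>Symmetry of mixed partial derivatives\<close>

lemma mixed_difference_mean_value:
  assumes f: "smooth4 f" and h: "0 < h"
  obtains \<xi> \<eta> where "0 < \<xi>" "\<xi> < h" "0 < \<eta>" "\<eta> < h"
    "f (x + h *\<^sub>R axis \<nu> 1 + h *\<^sub>R axis \<mu> 1) - f (x + h *\<^sub>R axis \<nu> 1) - f (x + h *\<^sub>R axis \<mu> 1) + f x
       = h * h * pdx \<mu> (pdx \<nu> f) (x + \<xi> *\<^sub>R axis \<nu> 1 + \<eta> *\<^sub>R axis \<mu> 1)"
proof -
  let ?e\<nu> = "axis \<nu> 1 :: real^4" and ?e\<mu> = "axis \<mu> 1 :: real^4"
  define \<phi> where "\<phi> s = f (x + h *\<^sub>R ?e\<mu> + s *\<^sub>R ?e\<nu>) - f (x + s *\<^sub>R ?e\<nu>)" for s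
  have "DERIV \<phi> s :> pdx \<nu> f (x + h *\<^sub>R ?e\<mu> + s *\<^sub>R ?e\<nu>) - pdx \<nu> f (x + s *\<^sub>R ?e\<nu>)" for s
    unfolding \<phi>_def by (intro DERIV_diff has_real_derivative_pdx_line smooth4_imp_differentiable f)
  from MVT2[OF h this] obtain \<xi> where \<xi>: "0 < \<xi>" "\<xi> < h" and \<phi>_diff: "\<phi> h - \<phi> 0 =
      h * (pdx \<nu> f (x + h *\<^sub>R ?e\<mu> + \<xi> *\<^sub>R ?e\<nu>) - pdx \<nu> f (x + \<xi> *\<^sub>R ?e\<nu>))"
    by auto
  have "DERIV (\<lambda>t. pdx \<nu> f (x + \<xi> *\<^sub>R ?e\<nu> + t *\<^sub>R ?e\<mu>)) t
      :> pdx \<mu> (pdx \<nu> f) (x + \<xi> *\<^sub>R ?e\<nu> + t *\<^sub>R ?e\<mu>)" for t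
    by (intro has_real_derivative_pdx_line smooth4_imp_differentiable smooth4_pdx f)
  from MVT2[OF h this] obtain \<eta> where \<eta>: "0 < \<eta>" "\<eta> < h" and
      "pdx \<nu> f (x + \<xi> *\<^sub>R ?e\<nu> + h *\<^sub>R ?e\<mu>) - pdx \<nu> f (x + \<xi> *\<^sub>R ?e\<nu> + 0 *\<^sub>R ?e\<mu>)
        = h * pdx \<mu> (pdx \<nu> f) (x + \<xi> *\<^sub>R ?e\<nu> + \<eta> *\<^sub>R ?e\<mu>)"
    by auto
  with \<phi>_diff have "\<phi> h - \<phi> 0 = h * h * pdx \<mu> (pdx \<nu> f) (x + \<xi> *\<^sub>R ?e\<nu> + \<eta> *\<^sub>R ?e\<mu>)"
    by (simp add: algebra_simps)
  then show ?thesis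
    using that[OF \<xi> \<eta>] unfolding \<phi>_def by (simp add: algebra_simps)
qed

lemma pdx_commute:
  assumes f: "smooth4 f"
  shows "pdx \<mu> (pdx \<nu> f) = pdx \<nu> (pdx \<mu> f)"
proof
  fix x
  let ?a = "pdx \<mu> (pdx \<nu> f)" and ?b = "pdx \<nu> (pdx \<mu> f)"
  show "?a x = ?b x"
  proof (rule ccontr)
    assume "?a x \<noteq> ?b x"
    define e where "e = \<bar>?a x - ?b x\<bar> / 2"
    have "e > 0" using \<open>?a x \<noteq> ?b x\<close> by (simp add: e_def)
    have "continuous (at x) ?a" "continuous (at x) ?b"
      using f
      by (auto intro!: differentiable_imp_continuous_within smooth4_imp_differentiable smooth4_pdx)
    then obtain da db where "da > 0" "db > 0"
      and da: "\<And>p. dist p x < da \<Longrightarrow> dist (?a p) (?a x) < e"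
      and db: "\<And>p. dist p x < db \<Longrightarrow> dist (?b p) (?b x) < e"
      using \<open>e > 0\<close> unfolding continuous_at_eps_delta by metis
    define d where "d = min da db"
    have "d > 0" using \<open>da > 0\<close> \<open>db > 0\<close> by (simp add: d_def)
    have d: "\<bar>?a p - ?a x\<bar> < e \<and> \<bar>?b p - ?b x\<bar> < e" if "dist p x < d" for p
      using da db that by (simp add: d_def dist_real_def)
    define h where "h = d / 4"
    have "h > 0" using \<open>d > 0\<close> by (simp add: h_def)
    have near: "dist (x + s *\<^sub>R axis i 1 + t *\<^sub>R axis j 1) x < d"
      if "0 < s" "s < h" "0 < t" "t < h" for s t i j
    proof -
      have "dist (x + s *\<^sub>R axis i 1 + t *\<^sub>R axis j 1) x
          \<le> norm (s *\<^sub>R axis i (1::real) :: real^4) + norm (t *\<^sub>R axis j (1::real) :: real^4)"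
        unfolding dist_norm by (simp add: add.assoc norm_triangle_ineq del: norm_scaleR)
      also have "\<dots> < d" using that by (simp add: h_def)
      finally show ?thesis .
    qed
    obtain \<xi> \<eta> where "0 < \<xi>" "\<xi> < h" "0 < \<eta>" "\<eta> < h" and a_eq:
      "f (x + h *\<^sub>R axis \<nu> 1 + h *\<^sub>R axis \<mu> 1) - f (x + h *\<^sub>R axis \<nu> 1) - f (x + h *\<^sub>R axis \<mu> 1) + f x
         = h * h * ?a (x + \<xi> *\<^sub>R axis \<nu> 1 + \<eta> *\<^sub>R axis \<mu> 1)"
      using mixed_difference_mean_value[OF f \<open>h > 0\<close>] by blast
    moreover obtain \<xi>' \<eta>' where "0 < \<xi>'" "\<xi>' < h" "0 < \<eta>'" "\<eta>' < h" and b_eq: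
      "f (x + h *\<^sub>R axis \<mu> 1 + h *\<^sub>R axis \<nu> 1) - f (x + h *\<^sub>R axis \<mu> 1) - f (x + h *\<^sub>R axis \<nu> 1) + f x
         = h * h * ?b (x + \<xi>' *\<^sub>R axis \<mu> 1 + \<eta>' *\<^sub>R axis \<nu> 1)"
      using mixed_difference_mean_value[OF f \<open>h > 0\<close>, of x \<mu> \<nu>] by blast
    ultimately have "?a (x + \<xi> *\<^sub>R axis \<nu> 1 + \<eta> *\<^sub>R axis \<mu> 1)
        = ?b (x + \<xi>' *\<^sub>R axis \<mu> 1 + \<eta>' *\<^sub>R axis \<nu> 1)"
      using \<open>h > 0\<close> by (simp add: algebra_simps)
    with d near[of \<xi> \<eta>] near[of \<xi>' \<eta>'] \<open>0 < \<xi>\<close> \<open>\<xi> < h\<close> \<open>0 < \<eta>\<close> \<open>\<eta> < h\<close>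
      \<open>0 < \<xi>'\<close> \<open>\<xi>' < h\<close> \<open>0 < \<eta>'\<close> \<open>\<eta>' < h\<close>
    have "\<bar>?a x - ?b x\<bar> < 2 * e" by (smt (verit))
    then show False unfolding e_def by simp
  qed
qed

text \<open>Orienting mixed partial derivatives gives the simplifier a normal form for them.\<close>

lemmas pdx_pdx_ordered =
  pdx_commute[where \<mu> = 1 and \<nu> = 0] pdx_commute[where \<mu> = 2 and \<nu> = 0]
  pdx_commute[where \<mu> = 3 and \<nu> = 0] pdx_commute[where \<mu> = 2 and \<nu> = 1]
  pdx_commute[where \<mu> = 3 and \<nu> = 1] pdx_commute[where \<mu> = 3 and \<nu> = 2]

lemma sum_pdx_pdx_antisym_eq_0:
  assumes smooth: "\<And>\<mu> \<nu>. \<mu> \<in> I \<Longrightarrow> \<nu> \<in> I \<Longrightarrow> smooth4 (W \<mu> \<nu>)"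
    and antisym: "\<And>\<mu> \<nu> y. \<mu> \<in> I \<Longrightarrow> \<nu> \<in> I \<Longrightarrow> W \<mu> \<nu> y = - W \<nu> \<mu> y"
  shows "(\<Sum>\<nu>\<in>I. \<Sum>\<mu>\<in>I. pdx \<nu> (pdx \<mu> (W \<mu> \<nu>)) x) = 0"
proof -
  let ?S = "\<Sum>\<nu>\<in>I. \<Sum>\<mu>\<in>I. pdx \<nu> (pdx \<mu> (W \<mu> \<nu>)) x"
  have "?S = (\<Sum>\<nu>\<in>I. \<Sum>\<mu>\<in>I. pdx \<mu> (pdx \<nu> (W \<mu> \<nu>)) x)"
    by (intro sum.cong refl) (simp add: pdx_commute smooth)
  also have "\<dots> = (\<Sum>\<nu>\<in>I. \<Sum>\<mu>\<in>I. - pdx \<mu> (pdx \<nu> (W \<nu> \<mu>)) x)"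
  proof (intro sum.cong refl)
    fix \<mu> \<nu> assume "\<mu> \<in> I" "\<nu> \<in> I"
    then have "W \<mu> \<nu> = (\<lambda>y. - W \<nu> \<mu> y)" by (intro ext antisym)
    then show "pdx \<mu> (pdx \<nu> (W \<mu> \<nu>)) x = - pdx \<mu> (pdx \<nu> (W \<nu> \<mu>)) x"
      using \<open>\<mu> \<in> I\<close> \<open>\<nu> \<in> I\<close> by (simp add: pdx_minus smooth smooth4_pdx)
  qed
  also have "\<dots> = - ?S"
    by (subst sum.swap) (simp add: sum_negf)
  finally show ?thesis by simp
qed

lemma sum_pdx_euler_lagrange_antisym:
  assumes "finite I"
    and smooth: "\<And>\<nu>. smooth4 (P \<nu>)" "\<And>\<mu> \<nu>. smooth4 (W \<mu> \<nu>)" "\<And>\<mu> \<nu>. smooth4 (G \<mu> \<nu>)"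
    and antisym: "\<And>\<mu> \<nu> y. \<mu> \<in> I \<Longrightarrow> \<nu> \<in> I \<Longrightarrow> W \<mu> \<nu> y = - W \<nu> \<mu> y"
  shows "(\<Sum>\<nu>\<in>I. pdx \<nu> (\<lambda>y. P \<nu> y - (\<Sum>\<mu>\<in>I. pdx \<mu> (W \<mu> \<nu>) y + pdx \<mu> (G \<mu> \<nu>) y)) x)
    = (\<Sum>\<nu>\<in>I. pdx \<nu> (P \<nu>) x) - (\<Sum>\<nu>\<in>I. \<Sum>\<mu>\<in>I. pdx \<nu> (pdx \<mu> (G \<mu> \<nu>)) x)"
proof -
  have smooth_pdx: "smooth4 (pdx \<mu> (W \<mu> \<nu>))" "smooth4 (pdx \<mu> (G \<mu> \<nu>))" for \<mu> \<nu>
    by (simp_all add: smooth smooth4_pdx)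
  have "pdx \<nu> (\<lambda>y. P \<nu> y - (\<Sum>\<mu>\<in>I. pdx \<mu> (W \<mu> \<nu>) y + pdx \<mu> (G \<mu> \<nu>) y)) x = pdx \<nu> (P \<nu>) x
      - ((\<Sum>\<mu>\<in>I. pdx \<nu> (pdx \<mu> (W \<mu> \<nu>)) x) + (\<Sum>\<mu>\<in>I. pdx \<nu> (pdx \<mu> (G \<mu> \<nu>)) x))" for \<nu>
    unfolding pdx_diff[OF smooth(1) smooth4_sum[OF \<open>finite I\<close> smooth4_add[OF smooth_pdx]]]
      pdx_sum[OF \<open>finite I\<close> smooth4_add[OF smooth_pdx]] pdx_add[OF smooth_pdx]
    by (simp add: sum.distrib)
  then have "(\<Sum>\<nu>\<in>I. pdx \<nu> (\<lambda>y. P \<nu> y - (\<Sum>\<mu>\<in>I. pdx \<mu> (W \<mu> \<nu>) y + pdx \<mu> (G \<mu> \<nu>) y)) x)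
      = (\<Sum>\<nu>\<in>I. pdx \<nu> (P \<nu>) x) - (\<Sum>\<nu>\<in>I. \<Sum>\<mu>\<in>I. pdx \<nu> (pdx \<mu> (W \<mu> \<nu>)) x)
        - (\<Sum>\<nu>\<in>I. \<Sum>\<mu>\<in>I. pdx \<nu> (pdx \<mu> (G \<mu> \<nu>)) x)"
    by (simp only: sum_subtractf sum.distrib diff_diff_eq)
  moreover have "(\<Sum>\<nu>\<in>I. \<Sum>\<mu>\<in>I. pdx \<nu> (pdx \<mu> (W \<mu> \<nu>)) x) = 0"
    using smooth(2) antisym by (rule sum_pdx_pdx_antisym_eq_0)
  ultimately show ?thesis by simp
qed

text \<open>Functions of (\<epsilon>, y) that are polynomial in \<epsilon> with smooth coefficients: every
  remainder of a \<theta>-expansion below lies in this class, hence is smooth in y and continuous in \<epsilon>.\<close>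

inductive_set eps_poly :: "(real \<Rightarrow> real^4 \<Rightarrow> real) set" where
  smooth: "smooth4 f \<Longrightarrow> (\<lambda>\<epsilon> y. f y) \<in> eps_poly"
| param: "(\<lambda>\<epsilon> y. \<epsilon>) \<in> eps_poly"
| add: "F \<in> eps_poly \<Longrightarrow> G \<in> eps_poly \<Longrightarrow> (\<lambda>\<epsilon> y. F \<epsilon> y + G \<epsilon> y) \<in> eps_poly"
| mult: "F \<in> eps_poly \<Longrightarrow> G \<in> eps_poly \<Longrightarrow> (\<lambda>\<epsilon> y. F \<epsilon> y * G \<epsilon> y) \<in> eps_poly"

lemma eps_poly_const: "(\<lambda>\<epsilon> y. c) \<in> eps_poly"
  using eps_poly.smooth[OF smooth4_const] .

lemma eps_poly_diff: "F \<in> eps_poly \<Longrightarrow> G \<in> eps_poly \<Longrightarrow> (\<lambda>\<epsilon> y. F \<epsilon> y - G \<epsilon> y) \<in> eps_poly"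
  using eps_poly.add[OF _ eps_poly.mult[OF eps_poly_const[of "-1"]]] by simp

lemma eps_poly_sum:
  "finite I \<Longrightarrow> (\<And>i. i \<in> I \<Longrightarrow> F i \<in> eps_poly) \<Longrightarrow> (\<lambda>\<epsilon> y. \<Sum>i\<in>I. F i \<epsilon> y) \<in> eps_poly"
  by (induction I rule: finite_induct) (auto intro: eps_poly_const eps_poly.add)

lemma eps_poly_smooth4: "F \<in> eps_poly \<Longrightarrow> smooth4 (F \<epsilon>)"
  by (induction rule: eps_poly.induct) (auto intro: smooth4_const smooth4_add smooth4_mult)

lemma eps_poly_continuous: "F \<in> eps_poly \<Longrightarrow> isCont (\<lambda>\<epsilon>. F \<epsilon> y) \<epsilon>0"
  by (induction rule: eps_poly.induct) auto

lemma eps_poly_pdx: "F \<in> eps_poly \<Longrightarrow> (\<lambda>\<epsilon>. pdx \<mu> (F \<epsilon>)) \<in> eps_poly"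
proof (induction rule: eps_poly.induct)
  case (smooth f)
  then show ?case by (simp add: eps_poly.smooth smooth4_pdx)
next
  case param
  then show ?case by (simp add: pdx_const eps_poly_const)
next
  case (add F G)
  then show ?case
    by (simp add: pdx_add eps_poly_smooth4 eps_poly.add)
next
  case (mult F G)
  then show ?case
    by (simp add: pdx_mult eps_poly_smooth4 eps_poly.add eps_poly.mult)
qed

lemma eps_poly_expand_at_0:
  assumes "F \<in> eps_poly"
  obtains G where "G \<in> eps_poly" "\<And>\<epsilon> y. F \<epsilon> y = F 0 y + \<epsilon> * G \<epsilon> y"
proof -
  from assms have "\<exists>G\<in>eps_poly. \<forall>\<epsilon> y. F \<epsilon> y = F 0 y + \<epsilon> * G \<epsilon> y"
  proof (induction rule: eps_poly.induct)
    case (smooth f)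
    show ?case using eps_poly_const[of 0] by force
  next
    case param
    show ?case using eps_poly_const[of 1] by force
  next
    case (add F G)
    then obtain F1 G1 where "F1 \<in> eps_poly" "G1 \<in> eps_poly"
      and eqs: "\<forall>\<epsilon> y. F \<epsilon> y = F 0 y + \<epsilon> * F1 \<epsilon> y" "\<forall>\<epsilon> y. G \<epsilon> y = G 0 y + \<epsilon> * G1 \<epsilon> y"
      by blast
    show ?case
    proof (intro bexI[of _ "\<lambda>\<epsilon> y. F1 \<epsilon> y + G1 \<epsilon> y"] allI)
      fix \<epsilon> y
      show "F \<epsilon> y + G \<epsilon> y = F 0 y + G 0 y + \<epsilon> * (F1 \<epsilon> y + G1 \<epsilon> y)"
        using eqs(1)[rule_format, of \<epsilon> y] eqs(2)[rule_format, of \<epsilon> y] by (simp add: algebra_simps)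
    qed (intro eps_poly.add; fact)
  next
    case (mult F G)
    then obtain F1 G1 where "F1 \<in> eps_poly" "G1 \<in> eps_poly"
      and eqs: "\<forall>\<epsilon> y. F \<epsilon> y = F 0 y + \<epsilon> * F1 \<epsilon> y" "\<forall>\<epsilon> y. G \<epsilon> y = G 0 y + \<epsilon> * G1 \<epsilon> y"
      by blast
    have "(\<lambda>\<epsilon> y. F 0 y) \<in> eps_poly" "(\<lambda>\<epsilon> y. G 0 y) \<in> eps_poly"
      using mult.hyps by (auto intro: eps_poly.smooth eps_poly_smooth4)
    show ?case
    proof (intro bexI[of _ "\<lambda>\<epsilon> y. F1 \<epsilon> y * G 0 y + F 0 y * G1 \<epsilon> y + \<epsilon> * (F1 \<epsilon> y * G1 \<epsilon> y)"] allI)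
      fix \<epsilon> y
      show "F \<epsilon> y * G \<epsilon> y = F 0 y * G 0 y
          + \<epsilon> * (F1 \<epsilon> y * G 0 y + F 0 y * G1 \<epsilon> y + \<epsilon> * (F1 \<epsilon> y * G1 \<epsilon> y))"
        using eqs(1)[rule_format, of \<epsilon> y] eqs(2)[rule_format, of \<epsilon> y] by (simp add: algebra_simps)
    qed (intro eps_poly.add eps_poly.mult eps_poly.param; fact)
  qed
  with that show ?thesis by blast
qed

text \<open>The Lagrangian and Hamiltonian densities belong to this class, so their jet derivatives
  \<open>pdj\<close> exist and belong to it again.\<close>

inductive_set jet_poly :: "(real \<Rightarrow> real^4 \<Rightarrow> ('v \<Rightarrow> real) \<Rightarrow> real) set" where
  smooth: "smooth4 f \<Longrightarrow> (\<lambda>\<epsilon> y q. f y) \<in> jet_poly"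
| param: "(\<lambda>\<epsilon> y q. \<epsilon>) \<in> jet_poly"
| var: "(\<lambda>\<epsilon> y q. q v) \<in> jet_poly"
| add: "F \<in> jet_poly \<Longrightarrow> G \<in> jet_poly \<Longrightarrow> (\<lambda>\<epsilon> y q. F \<epsilon> y q + G \<epsilon> y q) \<in> jet_poly"
| mult: "F \<in> jet_poly \<Longrightarrow> G \<in> jet_poly \<Longrightarrow> (\<lambda>\<epsilon> y q. F \<epsilon> y q * G \<epsilon> y q) \<in> jet_poly"

lemma jet_poly_const: "(\<lambda>\<epsilon> y q. c) \<in> jet_poly"
  using jet_poly.smooth[OF smooth4_const] .

lemma jet_poly_uminus: "F \<in> jet_poly \<Longrightarrow> (\<lambda>\<epsilon> y q. - F \<epsilon> y q) \<in> jet_poly"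
  using jet_poly.mult[OF jet_poly_const[of "-1"]] by simp

lemma jet_poly_diff: "F \<in> jet_poly \<Longrightarrow> G \<in> jet_poly \<Longrightarrow> (\<lambda>\<epsilon> y q. F \<epsilon> y q - G \<epsilon> y q) \<in> jet_poly"
  using jet_poly.add[OF _ jet_poly_uminus] by simp

lemma jet_poly_sum:
  "finite I \<Longrightarrow> (\<And>i. i \<in> I \<Longrightarrow> F i \<in> jet_poly) \<Longrightarrow> (\<lambda>\<epsilon> y q. \<Sum>i\<in>I. F i \<epsilon> y q) \<in> jet_poly"
  by (induction I rule: finite_induct) (auto intro: jet_poly_const jet_poly.add)

lemma jet_poly_of_eps_poly: "F \<in> eps_poly \<Longrightarrow> (\<lambda>\<epsilon> y q. F \<epsilon> y) \<in> jet_poly"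
  by (induction rule: eps_poly.induct) (auto intro: jet_poly.intros)

lemmas jet_poly_intros = jet_poly.add jet_poly.mult jet_poly.var jet_poly.param jet_poly_const
  jet_poly_diff jet_poly_uminus jet_poly_sum finite

lemma jet_poly_has_pdj:
  assumes "F \<in> jet_poly"
  obtains F' where "F' \<in> jet_poly"
    "\<And>\<epsilon> y q. ((\<lambda>t. F \<epsilon> y (q(v := t))) has_real_derivative F' \<epsilon> y q) (at (q v))"
proof -
  from assms have "\<exists>F'\<in>jet_poly. \<forall>\<epsilon> y q.
      ((\<lambda>t. F \<epsilon> y (q(v := t))) has_real_derivative F' \<epsilon> y q) (at (q v))"
  proof (induction rule: jet_poly.induct)
    case (var w)
    show ?case
      using jet_poly_const[of "if w = v then 1 else 0"]
      by (cases "w = v") (force intro: DERIV_ident DERIV_const)+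
  next
    case (add F G)
    then show ?case
      by (fastforce intro: jet_poly.add DERIV_add)
  next
    case (mult F G)
    then obtain F' G' where "F' \<in> jet_poly" "G' \<in> jet_poly"
      and dF: "\<forall>\<epsilon> y q. ((\<lambda>t. F \<epsilon> y (q(v := t))) has_real_derivative F' \<epsilon> y q) (at (q v))"
      and dG: "\<forall>\<epsilon> y q. ((\<lambda>t. G \<epsilon> y (q(v := t))) has_real_derivative G' \<epsilon> y q) (at (q v))"
      by blast
    show ?case
    proof (intro bexI[of _ "\<lambda>\<epsilon> y q. F' \<epsilon> y q * G \<epsilon> y q + F \<epsilon> y q * G' \<epsilon> y q"] allI)
      fix \<epsilon> y q
      show "((\<lambda>t. F \<epsilon> y (q(v := t)) * G \<epsilon> y (q(v := t))) has_real_derivative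
          F' \<epsilon> y q * G \<epsilon> y q + F \<epsilon> y q * G' \<epsilon> y q) (at (q v))"
        using DERIV_mult[OF dF[rule_format, of \<epsilon> y q] dG[rule_format, of \<epsilon> y q]]
        by (simp add: mult.commute)
    qed (intro jet_poly.add jet_poly.mult mult.hyps; fact)
  qed (use jet_poly_const[of 0] in force)+
  with that show ?thesis by blast
qed

lemma pdj_eqI:
  "((\<lambda>t. g (q(v := t))) has_real_derivative D) (at (q v)) \<Longrightarrow> pdj g q v = D"
  unfolding pdj_def by (rule DERIV_imp_deriv)

lemma jet_poly_pdj:
  "F \<in> jet_poly \<Longrightarrow> ((\<lambda>t. F \<epsilon> y (q(v := t))) has_real_derivative pdj (F \<epsilon> y) q v) (at (q v))"
  by (metis jet_poly_has_pdj pdj_eqI)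

lemma jet_poly_comp_eps_poly:
  "F \<in> jet_poly \<Longrightarrow> (\<And>v. (\<lambda>\<epsilon> y. jet \<epsilon> y v) \<in> eps_poly) \<Longrightarrow> (\<lambda>\<epsilon> y. F \<epsilon> y (jet \<epsilon> y)) \<in> eps_poly"
  by (induction rule: jet_poly.induct) (auto intro: eps_poly.intros)

lemma pdj_jet_poly_comp_eps_poly:
  assumes "F \<in> jet_poly" "\<And>v. (\<lambda>\<epsilon> y. jet \<epsilon> y v) \<in> eps_poly"
  shows "(\<lambda>\<epsilon> y. pdj (F \<epsilon> y) (jet \<epsilon> y) v) \<in> eps_poly"
proof -
  obtain F' where F': "F' \<in> jet_poly"
    and "\<And>\<epsilon> y q. ((\<lambda>t. F \<epsilon> y (q(v := t))) has_real_derivative F' \<epsilon> y q) (at (q v))"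
    using jet_poly_has_pdj[OF assms(1)] by blast
  then have "pdj (F \<epsilon> y) (jet \<epsilon> y) v = F' \<epsilon> y (jet \<epsilon> y)" for \<epsilon> y
    by (intro pdj_eqI)
  then show ?thesis
    using jet_poly_comp_eps_poly[OF F' assms(2)] by simp
qed

lemma pdj_add:
  assumes "((\<lambda>t. g (q(v := t))) has_real_derivative a) (at (q v))"
    and "((\<lambda>t. h (q(v := t))) has_real_derivative b) (at (q v))"
  shows "pdj (\<lambda>q. g q + h q) q v = a + b"
  using DERIV_add[OF assms] by (rule pdj_eqI)

lemma pdj_eq_0:
  "(\<And>t. g (q(v := t)) = g q) \<Longrightarrow> pdj g q v = 0"
  unfolding pdj_def by simp

lemma has_real_derivative_fun_upd:
  "((\<lambda>t. (q(v := t)) w) has_real_derivative (if w = v then 1 else 0)) (at s)"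
  by (cases "w = v") (auto intro: derivative_eq_intros)

text \<open>The hypothesis says that g sees p a and p b only through p a - p b, as a function of
  the field strength sees the derivatives of A.\<close>

lemma pdj_swap_antisym:
  assumes reflect: "\<And>s. g (p(a := s)) = g (p(b := p b + p a - s))"
    and deriv: "((\<lambda>t. g (p(b := t))) has_real_derivative D) (at (p b))"
  shows "pdj g p a = - pdj g p b"
proof -
  have "((\<lambda>s. p b + p a - s) has_real_derivative -1) (at (p a))"
    by (auto intro!: derivative_eq_intros)
  from DERIV_chain'[OF this] deriv
  have "((\<lambda>s. g (p(b := p b + p a - s))) has_real_derivative - D) (at (p a))"
    by simp
  then have "pdj g p a = - D"
    by (intro pdj_eqI) (simp add: reflect)
  moreover have "pdj g p b = D" using deriv by (rule pdj_eqI)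
  ultimately show ?thesis by simp
qed

section \<open>The Lagrangian side\<close>

lemma theta_entries:
  fixes \<theta> :: "4 \<Rightarrow> 4 \<Rightarrow> real"
  assumes "\<forall>\<mu> \<nu>. \<theta> \<mu> \<nu> = - \<theta> \<nu> \<mu>" and "\<forall>i. \<theta> 0 i = 0"
  shows "\<theta> 0 i = 0" "\<theta> i 0 = 0" "\<theta> 1 1 = 0" "\<theta> 2 2 = 0" "\<theta> 3 3 = 0"
    "\<theta> 2 1 = - \<theta> 1 2" "\<theta> 3 1 = - \<theta> 1 3" "\<theta> 3 2 = - \<theta> 2 3"
  using assms by (metis add.inverse_neutral neg_equal_zero)+

lemma Lws_jet_poly:
  assumes "\<And>\<alpha> \<beta>. (\<lambda>\<epsilon> y. \<theta> \<epsilon> \<alpha> \<beta>) \<in> eps_poly"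
  shows "(\<lambda>\<epsilon> y p. Lws (\<theta> \<epsilon>) p) \<in> jet_poly"
  unfolding Lws_def Fl_def Flup_def by (intro jet_poly_intros jet_poly_of_eps_poly assms)

lemma LJ_jet_poly:
  assumes "\<And>\<alpha> \<beta>. (\<lambda>\<epsilon> y. \<theta> \<epsilon> \<alpha> \<beta>) \<in> eps_poly" and "\<forall>\<mu>. smooth4 (J \<mu>)"
  shows "(\<lambda>\<epsilon> y p. LJ (\<theta> \<epsilon>) (\<lambda>\<mu>. J \<mu> y) p) \<in> jet_poly"
  unfolding LJ_def
  by (intro jet_poly_intros jet_poly.smooth jet_poly_of_eps_poly assms(1) assms(2)[rule_format])

lemma Lws_has_pdj: "((\<lambda>t. Lws \<theta> (p(v := t))) has_real_derivative pdj (Lws \<theta>) p v) (at (p v))"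
  using jet_poly_pdj[OF Lws_jet_poly[of "\<lambda>\<epsilon>. \<theta>"]] by (simp add: eps_poly_const)

lemma Lws_eqI: "Fl p = Fl p' \<Longrightarrow> Lws \<theta> p = Lws \<theta> p'"
  unfolding Lws_def Flup_def by simp

lemma pdj_Lws_LA: "pdj (Lws \<theta>) p (LA \<nu>) = 0"
  by (rule pdj_eq_0, rule Lws_eqI) (auto simp: Fl_def intro!: ext)

lemma pdj_Lws_LdA_antisym: "pdj (Lws \<theta>) p (LdA \<mu> \<nu>) = - pdj (Lws \<theta>) p (LdA \<nu> \<mu>)"
proof (cases "\<mu> = \<nu>")
  case True
  have "pdj (Lws \<theta>) p (LdA \<mu> \<mu>) = 0"
    by (rule pdj_eq_0, rule Lws_eqI) (auto simp: Fl_def intro!: ext)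
  with True show ?thesis by simp
next
  case False
  show ?thesis
  proof (rule pdj_swap_antisym)
    show "Lws \<theta> (p(LdA \<mu> \<nu> := s)) = Lws \<theta> (p(LdA \<nu> \<mu> := p (LdA \<nu> \<mu>) + p (LdA \<mu> \<nu>) - s))"
      for s using False by (intro Lws_eqI) (auto simp: Fl_def intro!: ext)
  qed (rule Lws_has_pdj)
qed

lemma LJ_has_pdj:
  "\<forall>\<mu>. smooth4 (J \<mu>) \<Longrightarrow>
    ((\<lambda>t. LJ \<theta> (\<lambda>\<mu>. J \<mu> y) (p(v := t))) has_real_derivative pdj (LJ \<theta> (\<lambda>\<mu>. J \<mu> y)) p v) (at (p v))"
  using jet_poly_pdj[OF LJ_jet_poly[of "\<lambda>\<epsilon>. \<theta>"]] by (simp add: eps_poly_const)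

lemma pdj_Lag:
  assumes "\<forall>\<mu>. smooth4 (J \<mu>)"
  shows "pdj (Lag \<theta> J y) p v = pdj (Lws \<theta>) p v + pdj (LJ \<theta> (\<lambda>\<mu>. J \<mu> y)) p v"
proof -
  have "Lag \<theta> J y = (\<lambda>p. Lws \<theta> p + LJ \<theta> (\<lambda>\<mu>. J \<mu> y) p)"
    by (simp add: Lag_def fun_eq_iff)
  then show ?thesis
    by (simp only:) (rule pdj_add[OF Lws_has_pdj LJ_has_pdj[OF assms]])
qed

lemma ljet_eps_poly: "\<forall>\<mu>. smooth4 (A \<mu>) \<Longrightarrow> (\<lambda>\<epsilon> y. ljet A y v) \<in> eps_poly"
  by (cases v) (auto simp: ljet_def intro: eps_poly.smooth smooth4_pdx)

lemma smooth4_pdj_Lws_ljet: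
  "\<forall>\<mu>. smooth4 (A \<mu>) \<Longrightarrow> smooth4 (\<lambda>y. pdj (Lws \<theta>) (ljet A y) v)"
  using eps_poly_smooth4[OF pdj_jet_poly_comp_eps_poly[OF Lws_jet_poly ljet_eps_poly, of "\<lambda>\<epsilon>. \<theta>"]]
  by (simp add: eps_poly_const)

lemma smooth4_pdj_LJ_ljet:
  "\<forall>\<mu>. smooth4 (A \<mu>) \<Longrightarrow> \<forall>\<mu>. smooth4 (J \<mu>) \<Longrightarrow>
    smooth4 (\<lambda>y. pdj (LJ \<theta> (\<lambda>\<mu>. J \<mu> y)) (ljet A y) v)"
  using eps_poly_smooth4[OF pdj_jet_poly_comp_eps_poly[OF LJ_jet_poly ljet_eps_poly, of "\<lambda>\<epsilon>. \<theta>"]]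
  by (simp add: eps_poly_const)

lemma divEB_eq_LJ_terms:
  assumes A: "\<forall>\<mu>. smooth4 (A \<mu>)" and J: "\<forall>\<mu>. smooth4 (J \<mu>)"
  shows "divEB \<theta> A J x =
     (\<Sum>\<nu>\<in>UNIV. pdx \<nu> (\<lambda>y. pdj (LJ \<theta> (\<lambda>\<mu>. J \<mu> y)) (ljet A y) (LA \<nu>)) x)
   - (\<Sum>\<nu>\<in>UNIV. \<Sum>\<mu>\<in>UNIV. pdx \<nu> (pdx \<mu> (\<lambda>y. pdj (LJ \<theta> (\<lambda>\<mu>. J \<mu> y)) (ljet A y) (LdA \<mu> \<nu>))) x)"
proof -
  have "EB \<theta> A J \<nu> = (\<lambda>y. pdj (LJ \<theta> (\<lambda>\<mu>. J \<mu> y)) (ljet A y) (LA \<nu>)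
      - (\<Sum>\<mu>\<in>UNIV. pdx \<mu> (\<lambda>y. pdj (Lws \<theta>) (ljet A y) (LdA \<mu> \<nu>)) y
          + pdx \<mu> (\<lambda>y. pdj (LJ \<theta> (\<lambda>\<mu>. J \<mu> y)) (ljet A y) (LdA \<mu> \<nu>)) y))" for \<nu>
    unfolding EB_def pdj_Lag[OF J] pdj_Lws_LA
    using A J by (simp add: fun_eq_iff pdx_add smooth4_pdj_Lws_ljet smooth4_pdj_LJ_ljet)
  then show ?thesis
    unfolding divEB_def
    by (simp only:) (rule sum_pdx_euler_lagrange_antisym,
        simp_all add: A J smooth4_pdj_Lws_ljet smooth4_pdj_LJ_ljet, rule pdj_Lws_LdA_antisym)
qed

lemma pdj_LJ:
  "pdj (LJ \<theta> Jx) p v =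
     - (\<Sum>\<mu>\<in>UNIV. (if LA \<mu> = v then 1 else 0) * Jx \<mu>)
     - (\<Sum>\<mu>\<in>UNIV. \<Sum>\<alpha>\<in>UNIV. \<Sum>\<beta>\<in>UNIV. \<theta> \<mu> \<alpha> * Jx \<beta> *
          ((if LA \<mu> = v then 1 else 0) * p (LdA \<alpha> \<beta>) + p (LA \<mu>) * (if LdA \<alpha> \<beta> = v then 1 else 0)))
     + (1/2) * (\<Sum>\<mu>\<in>UNIV. \<Sum>\<alpha>\<in>UNIV. \<Sum>\<beta>\<in>UNIV. \<theta> \<mu> \<alpha> * Jx \<beta> *
          ((if LA \<mu> = v then 1 else 0) * p (LdA \<beta> \<alpha>) + p (LA \<mu>) * (if LdA \<beta> \<alpha> = v then 1 else 0)))"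
  unfolding LJ_def
  by (rule pdj_eqI, rule DERIV_cong, (rule derivative_intros has_real_derivative_fun_upd)+)
    (simp add: algebra_simps)

theorem divEB_eq_Phi3cand:
  assumes antisym: "\<forall>\<mu> \<nu>. \<theta> \<mu> \<nu> = - \<theta> \<nu> \<mu>" and no_time: "\<forall>i. \<theta> 0 i = 0"
    and A: "\<forall>\<mu>. smooth4 (A \<mu>)" and J: "\<forall>\<mu>. smooth4 (J \<mu>)"
  shows "divEB \<theta> A J x = Phi3cand \<theta> A J x"
  unfolding divEB_eq_LJ_terms[OF A J] pdj_LJ Phi3cand_def divJ_def
  apply (simp add: sum_UNIV_4 sum_spat ljet_def theta_entries[OF antisym no_time]
      A[rule_format] J[rule_format] pdx_simps smooth4_simps pdx_pdx_ordered)
  apply (simp add: field_simps)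
  done

section \<open>The canonical side\<close>

lemma Hws_jet_poly:
  assumes "\<And>\<alpha> \<beta>. (\<lambda>\<epsilon> y. \<theta> \<epsilon> \<alpha> \<beta>) \<in> eps_poly"
  shows "(\<lambda>\<epsilon> y q. Hws (\<theta> \<epsilon>) q) \<in> jet_poly"
  unfolding Hws_def Fc_def Fcup_def by (intro jet_poly_intros jet_poly_of_eps_poly assms)

lemma HJ_jet_poly:
  assumes "\<And>\<alpha> \<beta>. (\<lambda>\<epsilon> y. \<theta> \<epsilon> \<alpha> \<beta>) \<in> eps_poly" and "\<forall>\<mu>. smooth4 (J \<mu>)"
  shows "(\<lambda>\<epsilon> y q. HJ (\<theta> \<epsilon>) (\<lambda>\<mu>. J \<mu> y) q) \<in> jet_poly"
  unfolding HJ_def Fc_def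
  by (intro jet_poly_intros jet_poly.smooth jet_poly_of_eps_poly assms(1) assms(2)[rule_format])

lemma Ham_jet_poly:
  assumes "\<And>\<alpha> \<beta>. (\<lambda>\<epsilon> y. \<theta> \<epsilon> \<alpha> \<beta>) \<in> eps_poly" and "\<forall>\<mu>. smooth4 (J \<mu>)"
  shows "(\<lambda>\<epsilon> y q. Ham (\<theta> \<epsilon>) J y q) \<in> jet_poly"
  unfolding Ham_def by (intro jet_poly.add Hws_jet_poly HJ_jet_poly assms)

lemma Hws_has_pdj: "((\<lambda>t. Hws \<theta> (q(v := t))) has_real_derivative pdj (Hws \<theta>) q v) (at (q v))"
  using jet_poly_pdj[OF Hws_jet_poly[of "\<lambda>\<epsilon>. \<theta>"]] by (simp add: eps_poly_const)

lemma HJ_has_pdj: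
  "\<forall>\<mu>. smooth4 (J \<mu>) \<Longrightarrow>
    ((\<lambda>t. HJ \<theta> (\<lambda>\<mu>. J \<mu> y) (q(v := t))) has_real_derivative pdj (HJ \<theta> (\<lambda>\<mu>. J \<mu> y)) q v) (at (q v))"
  using jet_poly_pdj[OF HJ_jet_poly[of "\<lambda>\<epsilon>. \<theta>"]] by (simp add: eps_poly_const)

lemma pdj_Ham:
  assumes "\<forall>\<mu>. smooth4 (J \<mu>)"
  shows "pdj (Ham \<theta> J y) q v = pdj (Hws \<theta>) q v + pdj (HJ \<theta> (\<lambda>\<mu>. J \<mu> y)) q v"
proof -
  have "Ham \<theta> J y = (\<lambda>q. Hws \<theta> q + HJ \<theta> (\<lambda>\<mu>. J \<mu> y) q)"
    by (simp add: Ham_def fun_eq_iff)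
  then show ?thesis
    by (simp only:) (rule pdj_add[OF Hws_has_pdj HJ_has_pdj[OF assms]])
qed

lemma Hws_eqI:
  "Fc q = Fc q' \<Longrightarrow> (\<forall>m. q (CP m) = q' (CP m)) \<Longrightarrow> (\<forall>l. q (CdA l 0) = q' (CdA l 0)) \<Longrightarrow>
    Hws \<theta> q = Hws \<theta> q'"
  unfolding Hws_def Fcup_def by simp

lemma pdj_Hws_CA: "pdj (Hws \<theta>) q (CA i) = 0"
  by (rule pdj_eq_0, rule Hws_eqI) (auto simp: Fc_def intro!: ext)

lemma pdj_Hws_CdP: "pdj (Hws \<theta>) q (CdP j k) = 0"
  by (rule pdj_eq_0, rule Hws_eqI) (auto simp: Fc_def intro!: ext)

lemma pdj_HJ_CdP: "pdj (HJ \<theta> Jx) q (CdP j k) = 0"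
  by (rule pdj_eq_0) (simp add: HJ_def Fc_def)

lemma pdj_Hws_CdA_antisym:
  assumes "i \<noteq> 0" "j \<noteq> 0"
  shows "pdj (Hws \<theta>) q (CdA j i) = - pdj (Hws \<theta>) q (CdA i j)"
proof (cases "i = j")
  case True
  have "pdj (Hws \<theta>) q (CdA i i) = 0"
    using assms by (intro pdj_eq_0 Hws_eqI) (auto simp: Fc_def intro!: ext)
  with True show ?thesis by simp
next
  case False
  show ?thesis
  proof (rule pdj_swap_antisym)
    show "Hws \<theta> (q(CdA j i := s)) = Hws \<theta> (q(CdA i j := q (CdA i j) + q (CdA j i) - s))" for s
      using False assms by (intro Hws_eqI) (auto simp: Fc_def intro!: ext)
  qed (rule Hws_has_pdj)
qed

lemma piF_eps_poly:
  assumes "\<And>\<alpha> \<beta>. (\<lambda>\<epsilon> y. \<theta> \<epsilon> \<alpha> \<beta>) \<in> eps_poly"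
    and A: "\<forall>\<mu>. smooth4 (A \<mu>)" and J: "\<forall>\<mu>. smooth4 (J \<mu>)"
  shows "(\<lambda>\<epsilon> y. piF (\<theta> \<epsilon>) A J i y) \<in> eps_poly"
proof (cases "i = 0")
  case True
  then show ?thesis by (simp add: piF_def eps_poly_const)
next
  case False
  then show ?thesis
    unfolding piF_def Ffup_def Ff_def
    by (simp only: if_False)
      (intro eps_poly.add eps_poly.mult eps_poly_diff eps_poly_sum eps_poly.param eps_poly_const
        eps_poly.smooth finite assms(1) A[rule_format] J[rule_format] smooth4_pdx)
qed

lemma cjet_eps_poly:
  assumes "\<And>\<alpha> \<beta>. (\<lambda>\<epsilon> y. \<theta> \<epsilon> \<alpha> \<beta>) \<in> eps_poly"
    and A: "\<forall>\<mu>. smooth4 (A \<mu>)" and J: "\<forall>\<mu>. smooth4 (J \<mu>)"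
  shows "(\<lambda>\<epsilon> y. cjet (\<theta> \<epsilon>) A J y v) \<in> eps_poly"
proof -
  have "(\<lambda>\<epsilon> y. piF (\<theta> \<epsilon>) A J \<mu> y) \<in> eps_poly" for \<mu>
    by (rule piF_eps_poly[of \<theta>, OF assms])
  then show ?thesis
    using A by (cases v) (auto simp: cjet_def intro: eps_poly.smooth smooth4_pdx eps_poly_pdx)
qed

lemma cjet_const_eps_poly:
  "\<forall>\<mu>. smooth4 (A \<mu>) \<Longrightarrow> \<forall>\<mu>. smooth4 (J \<mu>) \<Longrightarrow> (\<lambda>\<epsilon> y. cjet \<theta> A J y v) \<in> eps_poly"
  using cjet_eps_poly[of "\<lambda>\<epsilon>. \<theta>"] by (simp add: eps_poly_const)

lemma smooth4_pdj_Hws_cjet: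
  "\<forall>\<mu>. smooth4 (A \<mu>) \<Longrightarrow> \<forall>\<mu>. smooth4 (J \<mu>) \<Longrightarrow> smooth4 (\<lambda>y. pdj (Hws \<theta>) (cjet \<theta> A J y) v)"
  using eps_poly_smooth4[OF pdj_jet_poly_comp_eps_poly[OF Hws_jet_poly[of "\<lambda>\<epsilon>. \<theta>", OF eps_poly_const]
      cjet_const_eps_poly]] by simp

lemma smooth4_pdj_HJ_cjet:
  assumes "\<forall>\<mu>. smooth4 (A \<mu>)" and J: "\<forall>\<mu>. smooth4 (J \<mu>)"
  shows "smooth4 (\<lambda>y. pdj (HJ \<theta> (\<lambda>\<mu>. J \<mu> y)) (cjet \<theta> A J y) v)"
  using eps_poly_smooth4[OF pdj_jet_poly_comp_eps_poly[OF HJ_jet_poly[of "\<lambda>\<epsilon>. \<theta>", OF eps_poly_const J]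
      cjet_const_eps_poly[OF assms]]] by simp

lemma sum_pdx_dHdA_eq_HJ_terms:
  assumes A: "\<forall>\<mu>. smooth4 (A \<mu>)" and J: "\<forall>\<mu>. smooth4 (J \<mu>)"
  shows "(\<Sum>i\<in>spat. pdx i (dHdA \<theta> A J i) x) =
     (\<Sum>i\<in>spat. pdx i (\<lambda>y. pdj (HJ \<theta> (\<lambda>\<mu>. J \<mu> y)) (cjet \<theta> A J y) (CA i)) x)
   - (\<Sum>i\<in>spat. \<Sum>j\<in>spat. pdx i (pdx j (\<lambda>y. pdj (HJ \<theta> (\<lambda>\<mu>. J \<mu> y)) (cjet \<theta> A J y) (CdA j i))) x)"
proof -
  have "dHdA \<theta> A J i = (\<lambda>y. pdj (HJ \<theta> (\<lambda>\<mu>. J \<mu> y)) (cjet \<theta> A J y) (CA i)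
      - (\<Sum>j\<in>spat. pdx j (\<lambda>y. pdj (Hws \<theta>) (cjet \<theta> A J y) (CdA j i)) y
          + pdx j (\<lambda>y. pdj (HJ \<theta> (\<lambda>\<mu>. J \<mu> y)) (cjet \<theta> A J y) (CdA j i)) y))" for i
    unfolding dHdA_def pdj_Ham[OF J] pdj_Hws_CA
    using A J by (simp add: fun_eq_iff pdx_add smooth4_pdj_Hws_cjet smooth4_pdj_HJ_cjet)
  then show ?thesis
    by (simp only:) (rule sum_pdx_euler_lagrange_antisym,
        simp_all add: A J smooth4_pdj_Hws_cjet smooth4_pdj_HJ_cjet spat_def, rule pdj_Hws_CdA_antisym)
qed

lemma pdj_phi2:
  "pdj (phi2 \<theta> J x) q v = (\<Sum>i\<in>spat. if CdP i i = v then 1 else 0)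
     + 1/2 * (\<Sum>k\<in>spat. \<Sum>l\<in>spat. \<theta> k l *
         ((if CdA l k = v then 1 else 0) * J 0 x + (if CA k = v then 1 else 0) * pdx l (J 0) x))"
  unfolding phi2_def
  by (rule pdj_eqI, rule DERIV_cong, (rule derivative_intros has_real_derivative_fun_upd)+)
    (simp add: algebra_simps)

lemma PB_phi2_H_eq:
  "PB_phi2_H \<theta> A J x =
       (\<Sum>k\<in>spat. (1/2 * (\<Sum>l\<in>spat. \<theta> k l * pdx l (J 0) x)) * dHdP \<theta> A J k x)
     + (\<Sum>j\<in>spat. \<Sum>k\<in>spat. (1/2 * \<theta> k j * J 0 x) * pdx j (dHdP \<theta> A J k) x)
     - (\<Sum>i\<in>spat. pdx i (dHdA \<theta> A J i) x)"
  unfolding PB_phi2_H_def pdj_phi2 by (simp add: sum_UNIV_4 sum_spat algebra_simps)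

lemma dHdP_eq_pdj_Ham:
  "\<forall>\<mu>. smooth4 (J \<mu>) \<Longrightarrow> dHdP \<theta> A J k y = pdj (Ham \<theta> J y) (cjet \<theta> A J y) (CP k)"
  unfolding dHdP_def by (simp add: pdj_Ham pdj_Hws_CdP pdj_HJ_CdP pdx_const)

lemma sum_eta_mult: "(\<Sum>\<beta>\<in>UNIV. eta \<mu> \<beta> * f \<beta>) = eta \<mu> \<mu> * f \<mu>"
proof -
  have "(\<Sum>\<beta>\<in>UNIV. eta \<mu> \<beta> * f \<beta>) = (\<Sum>\<beta>\<in>UNIV. if \<beta> = \<mu> then eta \<mu> \<mu> * f \<mu> else 0)"
    by (rule sum.cong) (simp_all add: eta_def)
  then show ?thesis by simp
qed

lemma piF_zero:
  "m \<in> spat \<Longrightarrow> piF (\<lambda>_ _. 0) A J m y = pdx 0 (A m) y - pdx m (A 0) y"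
  by (simp add: spat_def piF_def Ffup_def Ff_def mult.assoc sum_distrib_left[symmetric] sum_eta_mult)
    (simp add: eta_def)

lemma pdj_Ham_zero_CP:
  assumes "k \<in> spat"
  shows "pdj (Ham (\<lambda>_ _. 0) J y) q (CP k) = q (CdA k 0) + q (CP k)"
  unfolding Ham_def Hws_def HJ_def Fcup_def Fc_def
  by (rule pdj_eqI, rule DERIV_cong, (rule derivative_intros has_real_derivative_fun_upd)+)
    (use assms in \<open>auto simp: spat_eq sum_spat eta_def\<close>)

lemma pdj_HJ_CA:
  assumes "i \<in> spat"
  shows "pdj (HJ \<theta> Jx) q (CA i) = Jx i + 1/2 * (\<Sum>l\<in>spat. \<theta> i l * (Jx 0 * q (CdA l 0)
     + (\<Sum>k\<in>spat. Jx k * q (CdA l k)) + Jx 0 * eta 0 0 * (\<Sum>m\<in>spat. eta l m * q (CP m))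
     - (\<Sum>k\<in>spat. Fc q k l * Jx k)))"
  unfolding HJ_def Fc_def
  by (rule pdj_eqI, rule DERIV_cong, (rule derivative_intros has_real_derivative_fun_upd)+)
    (use assms in \<open>auto simp: spat_eq sum_spat eta_def Fc_def algebra_simps\<close>)

lemma pdj_HJ_CdA:
  assumes "i \<in> spat" "j \<in> spat"
  shows "pdj (HJ \<theta> Jx) q (CdA j i)
    = (\<Sum>m\<in>spat. \<theta> m j * q (CA m)) * Jx i - 1/2 * (\<Sum>m\<in>spat. \<theta> m i * q (CA m)) * Jx j"
  unfolding HJ_def Fc_def
  by (rule pdj_eqI, rule DERIV_cong, (rule derivative_intros has_real_derivative_fun_upd)+)
    (use assms in \<open>auto simp: spat_eq sum_spat eta_def Fc_def algebra_simps\<close>)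

section \<open>Expansion to first order in \<theta>\<close>

lemma scale_theta_eps_poly: "(\<lambda>\<epsilon> y. scale_theta \<epsilon> \<Theta> \<alpha> \<beta>) \<in> eps_poly"
  unfolding scale_theta_def by (intro eps_poly.mult eps_poly.param eps_poly_const)

lemma scale_theta_antisym:
  "\<forall>\<mu> \<nu>. \<Theta> \<mu> \<nu> = - \<Theta> \<nu> \<mu> \<Longrightarrow> \<forall>\<mu> \<nu>. scale_theta \<epsilon> \<Theta> \<mu> \<nu> = - scale_theta \<epsilon> \<Theta> \<nu> \<mu>"
  unfolding scale_theta_def by (metis mult_minus_right)

lemma scale_theta_no_time: "\<forall>i. \<Theta> 0 i = 0 \<Longrightarrow> \<forall>i. scale_theta \<epsilon> \<Theta> 0 i = 0"
  unfolding scale_theta_def by simp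

lemma dHdP_expansion:
  assumes A: "\<forall>\<mu>. smooth4 (A \<mu>)" and J: "\<forall>\<mu>. smooth4 (J \<mu>)"
  obtains G where "\<And>k. G k \<in> eps_poly"
    "\<And>k \<epsilon> y. k \<in> spat \<Longrightarrow> dHdP (scale_theta \<epsilon> \<Theta>) A J k y = pdx 0 (A k) y + \<epsilon> * G k \<epsilon> y"
proof -
  define D where "D k \<epsilon> y = pdj (Ham (scale_theta \<epsilon> \<Theta>) J y) (cjet (scale_theta \<epsilon> \<Theta>) A J y) (CP k)"
    for k \<epsilon> y
  have "D k \<in> eps_poly" for k
    unfolding D_def[abs_def]
    by (intro pdj_jet_poly_comp_eps_poly Ham_jet_poly cjet_eps_poly scale_theta_eps_poly A J)
  then have "\<forall>k. \<exists>G. G \<in> eps_poly \<and> (\<forall>\<epsilon> y. D k \<epsilon> y = D k 0 y + \<epsilon> * G \<epsilon> y)"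
    by (metis eps_poly_expand_at_0)
  then obtain G where G: "\<And>k. G k \<in> eps_poly" "\<And>k \<epsilon> y. D k \<epsilon> y = D k 0 y + \<epsilon> * G k \<epsilon> y"
    by metis
  have "D k 0 y = pdx 0 (A k) y" if "k \<in> spat" for k y
    using pdj_Ham_zero_CP[OF that] piF_zero[OF that]
    by (simp add: D_def scale_theta_def cjet_def)
  with G that show ?thesis
    by (metis D_def dHdP_eq_pdj_Ham[OF J])
qed

text \<open>The part of dH_J/dA_i linear in \<theta>, with \<pi>^m replaced by its value F_0m at \<theta> = 0,
  and dH_J/d(d_j A_i) evaluated on the fields.\<close>

definition HJ_A_first_order ::
    "(4 \<Rightarrow> 4 \<Rightarrow> real) \<Rightarrow> (4 \<Rightarrow> real^4 \<Rightarrow> real) \<Rightarrow> (4 \<Rightarrow> real^4 \<Rightarrow> real) \<Rightarrow> 4 \<Rightarrow> real^4 \<Rightarrow> real"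
  where "HJ_A_first_order \<theta> A J i y = 1/2 * (\<Sum>l\<in>spat. \<theta> i l *
      (J 0 y * pdx l (A 0) y + (\<Sum>k\<in>spat. J k y * pdx l (A k) y)
      + J 0 y * eta 0 0 * (\<Sum>m\<in>spat. eta l m * (pdx 0 (A m) y - pdx m (A 0) y))
      - (\<Sum>k\<in>spat. (pdx k (A l) y - pdx l (A k) y) * J k y)))"

definition HJ_dA ::
    "(4 \<Rightarrow> 4 \<Rightarrow> real) \<Rightarrow> (4 \<Rightarrow> real^4 \<Rightarrow> real) \<Rightarrow> (4 \<Rightarrow> real^4 \<Rightarrow> real) \<Rightarrow> 4 \<Rightarrow> 4 \<Rightarrow> real^4 \<Rightarrow> real"
  where "HJ_dA \<theta> A J j i y =
    (\<Sum>m\<in>spat. \<theta> m j * A m y) * J i y - 1/2 * (\<Sum>m\<in>spat. \<theta> m i * A m y) * J j y"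

lemma smooth4_HJ_A_first_order:
  "\<forall>\<mu>. smooth4 (A \<mu>) \<Longrightarrow> \<forall>\<mu>. smooth4 (J \<mu>) \<Longrightarrow> smooth4 (HJ_A_first_order \<theta> A J i)"
  unfolding HJ_A_first_order_def[abs_def] by (intro smooth4_simps smooth4_sum smooth4_cmult finite) auto

lemma pdj_HJ_CA_expansion:
  assumes A: "\<forall>\<mu>. smooth4 (A \<mu>)" and J: "\<forall>\<mu>. smooth4 (J \<mu>)"
  obtains T where "\<And>i. T i \<in> eps_poly"
    "\<And>i \<epsilon> y. i \<in> spat \<Longrightarrow> pdj (HJ (scale_theta \<epsilon> \<Theta>) (\<lambda>\<mu>. J \<mu> y)) (cjet (scale_theta \<epsilon> \<Theta>) A J y) (CA i)
        = J i y + HJ_A_first_order (scale_theta \<epsilon> \<Theta>) A J i y + \<epsilon>\<^sup>2 * T i \<epsilon> y"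
proof -
  define Tf where "Tf i \<epsilon> y = 1/2 * (\<Sum>l\<in>spat. \<Theta> i l *
      (J 0 y * pdx l (A 0) y + (\<Sum>k\<in>spat. J k y * pdx l (A k) y)
      + J 0 y * eta 0 0 * (\<Sum>m\<in>spat. eta l m * piF (scale_theta \<epsilon> \<Theta>) A J m y)
      - (\<Sum>k\<in>spat. (pdx k (A l) y - pdx l (A k) y) * J k y)))" for i \<epsilon> y
  have HA: "pdj (HJ (scale_theta \<epsilon> \<Theta>) (\<lambda>\<mu>. J \<mu> y)) (cjet (scale_theta \<epsilon> \<Theta>) A J y) (CA i)
      = J i y + \<epsilon> * Tf i \<epsilon> y" if "i \<in> spat" for i \<epsilon> y
    unfolding pdj_HJ_CA[OF that] Tf_def
    by (simp add: cjet_def Fc_def scale_theta_def sum_spat algebra_simps)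
  have "Tf i \<in> eps_poly" for i
    unfolding Tf_def[abs_def]
    by (intro eps_poly.add eps_poly.mult eps_poly_diff eps_poly_sum eps_poly_const eps_poly.smooth
        finite piF_eps_poly scale_theta_eps_poly A J A[rule_format] J[rule_format] smooth4_pdx)
  then have "\<forall>i. \<exists>T. T \<in> eps_poly \<and> (\<forall>\<epsilon> y. Tf i \<epsilon> y = Tf i 0 y + \<epsilon> * T \<epsilon> y)"
    by (metis eps_poly_expand_at_0)
  then obtain T where T: "\<And>i. T i \<in> eps_poly" "\<And>i \<epsilon> y. Tf i \<epsilon> y = Tf i 0 y + \<epsilon> * T i \<epsilon> y"
    by metis
  have Tf_0: "\<epsilon> * Tf i 0 y = HJ_A_first_order (scale_theta \<epsilon> \<Theta>) A J i y" for i \<epsilon> y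
    unfolding Tf_def HJ_A_first_order_def
    by (simp add: scale_theta_def piF_zero sum_distrib_left mult.assoc cong: sum.cong)
  show ?thesis
  proof (rule that[OF T(1)])
    fix i \<epsilon> y assume "i \<in> spat"
    show "pdj (HJ (scale_theta \<epsilon> \<Theta>) (\<lambda>\<mu>. J \<mu> y)) (cjet (scale_theta \<epsilon> \<Theta>) A J y) (CA i)
        = J i y + HJ_A_first_order (scale_theta \<epsilon> \<Theta>) A J i y + \<epsilon>\<^sup>2 * T i \<epsilon> y"
      using HA[OF \<open>i \<in> spat\<close>, of \<epsilon> y] T(2)[of i \<epsilon> y] Tf_0[of \<epsilon> i y]
      by (simp add: algebra_simps power2_eq_square)
  qed
qed

text \<open>The left-hand side is \<open>PB_phi2_H_eq\<close> plus the explicit time derivative, with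
  dH/d\<pi>^k replaced by d_0 A_k and dH_J/dA_i by J^i plus its first-order part.\<close>

lemma phi2_dot_first_order:
  assumes antisym: "\<forall>\<mu> \<nu>. \<theta> \<mu> \<nu> = - \<theta> \<nu> \<mu>" and no_time: "\<forall>i. \<theta> 0 i = 0"
    and A: "\<forall>\<mu>. smooth4 (A \<mu>)" and J: "\<forall>\<mu>. smooth4 (J \<mu>)"
  shows "(\<Sum>k\<in>spat. (1/2 * (\<Sum>l\<in>spat. \<theta> k l * pdx l (J 0) x)) * pdx 0 (A k) x)
     + (\<Sum>j\<in>spat. \<Sum>k\<in>spat. (1/2 * \<theta> k j * J 0 x) * pdx j (pdx 0 (A k)) x)
     - (\<Sum>i\<in>spat. pdx i (J i) x + pdx i (HJ_A_first_order \<theta> A J i) x)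
     + (\<Sum>i\<in>spat. \<Sum>j\<in>spat. pdx i (pdx j (HJ_dA \<theta> A J j i)) x)
     + phi2_expl \<theta> A J x
     = Phi3cand \<theta> A J x"
  unfolding HJ_A_first_order_def HJ_dA_def phi2_expl_def Phi3cand_def divJ_def
  apply (simp add: sum_UNIV_4 sum_spat theta_entries[OF antisym no_time] eta_def
      A[rule_format] J[rule_format] pdx_simps smooth4_simps pdx_pdx_ordered)
  apply (simp add: field_simps)
  done

lemma PB_phi2_H_expansion:
  fixes \<epsilon> :: real
  assumes A: "\<forall>\<mu>. smooth4 (A \<mu>)" and J: "\<forall>\<mu>. smooth4 (J \<mu>)"
    and G: "\<And>k. G k \<in> eps_poly"
      "\<And>k \<epsilon> y. k \<in> spat \<Longrightarrow> dHdP (scale_theta \<epsilon> \<Theta>) A J k y = pdx 0 (A k) y + \<epsilon> * G k \<epsilon> y"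
    and T: "\<And>i. T i \<in> eps_poly"
      "\<And>i \<epsilon> y. i \<in> spat \<Longrightarrow> pdj (HJ (scale_theta \<epsilon> \<Theta>) (\<lambda>\<mu>. J \<mu> y)) (cjet (scale_theta \<epsilon> \<Theta>) A J y) (CA i)
        = J i y + HJ_A_first_order (scale_theta \<epsilon> \<Theta>) A J i y + \<epsilon>\<^sup>2 * T i \<epsilon> y"
  defines "\<theta> \<equiv> scale_theta \<epsilon> \<Theta>"
  shows "PB_phi2_H \<theta> A J x =
        (\<Sum>k\<in>spat. (1/2 * (\<Sum>l\<in>spat. \<theta> k l * pdx l (J 0) x)) * (pdx 0 (A k) x + \<epsilon> * G k \<epsilon> x))
      + (\<Sum>j\<in>spat. \<Sum>k\<in>spat. (1/2 * \<theta> k j * J 0 x) * (pdx j (pdx 0 (A k)) x + \<epsilon> * pdx j (G k \<epsilon>) x))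
      - ((\<Sum>i\<in>spat. pdx i (J i) x + pdx i (HJ_A_first_order \<theta> A J i) x + \<epsilon>\<^sup>2 * pdx i (T i \<epsilon>) x)
      - (\<Sum>i\<in>spat. \<Sum>j\<in>spat. pdx i (pdx j (HJ_dA \<theta> A J j i)) x))"
proof -
  have smooth: "smooth4 (G k \<epsilon>)" "smooth4 (T k \<epsilon>)" for k
    using G(1) T(1) by (simp_all add: eps_poly_smooth4)
  have pdx_dHdP: "pdx j (dHdP \<theta> A J k) x = pdx j (pdx 0 (A k)) x + \<epsilon> * pdx j (G k \<epsilon>) x"
    if "k \<in> spat" for j k
  proof -
    have "dHdP \<theta> A J k = (\<lambda>y. pdx 0 (A k) y + \<epsilon> * G k \<epsilon> y)"
      using G(2)[OF that] by (simp add: fun_eq_iff \<theta>_def)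
    with A show ?thesis by (simp add: pdx_add pdx_cmult smooth smooth4_cmult smooth4_pdx)
  qed
  have pdx_HJ_A: "pdx i (\<lambda>y. pdj (HJ \<theta> (\<lambda>\<mu>. J \<mu> y)) (cjet \<theta> A J y) (CA i)) x
      = pdx i (J i) x + pdx i (HJ_A_first_order \<theta> A J i) x + \<epsilon>\<^sup>2 * pdx i (T i \<epsilon>) x"
    if "i \<in> spat" for i
  proof -
    have "(\<lambda>y. pdj (HJ \<theta> (\<lambda>\<mu>. J \<mu> y)) (cjet \<theta> A J y) (CA i))
        = (\<lambda>y. J i y + HJ_A_first_order \<theta> A J i y + \<epsilon>\<^sup>2 * T i \<epsilon> y)"
      using T(2)[OF that] by (simp add: fun_eq_iff \<theta>_def)
    with A J show ?thesis
      by (simp add: pdx_add pdx_cmult smooth smooth4_add smooth4_cmult smooth4_HJ_A_first_order)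
  qed
  have HJ_dA: "(\<lambda>y. pdj (HJ \<theta> (\<lambda>\<mu>. J \<mu> y)) (cjet \<theta> A J y) (CdA j i)) = HJ_dA \<theta> A J j i"
    if "i \<in> spat" "j \<in> spat" for i j
    using pdj_HJ_CdA[OF that] by (simp add: fun_eq_iff HJ_dA_def cjet_def)
  have "(\<Sum>i\<in>spat. pdx i (dHdA \<theta> A J i) x) =
      (\<Sum>i\<in>spat. pdx i (J i) x + pdx i (HJ_A_first_order \<theta> A J i) x + \<epsilon>\<^sup>2 * pdx i (T i \<epsilon>) x)
    - (\<Sum>i\<in>spat. \<Sum>j\<in>spat. pdx i (pdx j (HJ_dA \<theta> A J j i)) x)"
    unfolding sum_pdx_dHdA_eq_HJ_terms[OF A J]
    by (intro arg_cong2[where f = "(-)"] sum.cong refl pdx_HJ_A) (simp_all only: HJ_dA)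
  then show ?thesis
    unfolding PB_phi2_H_eq
    by (intro arg_cong2[where f = "(-)"] arg_cong2[where f = "(+)"] sum.cong refl)
      (simp_all add: G(2)[of _ \<epsilon>, folded \<theta>_def] pdx_dHdP)
qed

lemma phi2_dot_expansion:
  assumes antisym: "\<forall>\<mu> \<nu>. \<Theta> \<mu> \<nu> = - \<Theta> \<nu> \<mu>" and no_time: "\<forall>i. \<Theta> 0 i = 0"
    and A: "\<forall>\<mu>. smooth4 (A \<mu>)" and J: "\<forall>\<mu>. smooth4 (J \<mu>)"
  obtains R where "isCont R 0"
    "\<And>\<epsilon>. phi2_dot (scale_theta \<epsilon> \<Theta>) A J x = Phi3cand (scale_theta \<epsilon> \<Theta>) A J x + \<epsilon>\<^sup>2 * R \<epsilon>"
proof -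
  obtain G where G: "\<And>k. G k \<in> eps_poly"
    "\<And>k \<epsilon> y. k \<in> spat \<Longrightarrow> dHdP (scale_theta \<epsilon> \<Theta>) A J k y = pdx 0 (A k) y + \<epsilon> * G k \<epsilon> y"
    using dHdP_expansion[OF A J] by blast
  obtain T where T: "\<And>i. T i \<in> eps_poly"
    "\<And>i \<epsilon> y. i \<in> spat \<Longrightarrow> pdj (HJ (scale_theta \<epsilon> \<Theta>) (\<lambda>\<mu>. J \<mu> y)) (cjet (scale_theta \<epsilon> \<Theta>) A J y) (CA i)
        = J i y + HJ_A_first_order (scale_theta \<epsilon> \<Theta>) A J i y + \<epsilon>\<^sup>2 * T i \<epsilon> y"
    using pdj_HJ_CA_expansion[OF A J] by blast
  define R where "R \<epsilon> = (\<Sum>k\<in>spat. (1/2 * (\<Sum>l\<in>spat. \<Theta> k l * pdx l (J 0) x)) * G k \<epsilon> x)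
     + (\<Sum>j\<in>spat. \<Sum>k\<in>spat. (1/2 * \<Theta> k j * J 0 x) * pdx j (G k \<epsilon>) x)
     - (\<Sum>i\<in>spat. pdx i (T i \<epsilon>) x)" for \<epsilon>
  have "isCont R 0"
    unfolding R_def[abs_def] using G(1) T(1)
    by (intro continuous_intros eps_poly_continuous eps_poly_pdx)
  moreover have "phi2_dot (scale_theta \<epsilon> \<Theta>) A J x = Phi3cand (scale_theta \<epsilon> \<Theta>) A J x + \<epsilon>\<^sup>2 * R \<epsilon>"
    for \<epsilon>
    using PB_phi2_H_expansion[OF A J G T, of \<epsilon> x]
    unfolding phi2_dot_def
      phi2_dot_first_order[OF scale_theta_antisym[of \<Theta>, OF antisym]
        scale_theta_no_time[of \<Theta>, OF no_time] A J, of \<epsilon> x, symmetric] R_def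
    by (simp add: sum_spat scale_theta_def field_simps power2_eq_square)
  ultimately show ?thesis using that by blast
qed

lemma continuous_mult_square_bigo:
  fixes R :: "real \<Rightarrow> real"
  assumes "isCont R 0"
  shows "(\<lambda>\<epsilon>. \<epsilon>\<^sup>2 * R \<epsilon>) \<in> O[at 0](\<lambda>\<epsilon>. \<epsilon>\<^sup>2)"
proof -
  have "R \<in> O[at 0](\<lambda>_. 1)"
    using assms by (intro bigoI_tendsto[where c = "R 0"]) (simp_all add: isCont_def)
  from landau_o.big.mult_left[OF this, of "\<lambda>\<epsilon>. \<epsilon>\<^sup>2"] show ?thesis by simp
qed

theorem proposition1:
  fixes \<Theta> :: "4 \<Rightarrow> 4 \<Rightarrow> real"
    and A J :: "4 \<Rightarrow> real^4 \<Rightarrow> real"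
    and x :: "real^4"
  assumes antisym: "\<forall>\<mu> \<nu>. \<Theta> \<mu> \<nu> = - \<Theta> \<nu> \<mu>"
    and no_time: "\<forall>i. \<Theta> 0 i = 0"
    and smoothA: "\<forall>\<mu>. smooth4 (A \<mu>)"
    and smoothJ: "\<forall>\<mu>. smooth4 (J \<mu>)"
  shows "(\<lambda>\<epsilon>. divEB (scale_theta \<epsilon> \<Theta>) A J x - phi2_dot (scale_theta \<epsilon> \<Theta>) A J x)
           \<in> O[at 0](\<lambda>\<epsilon>. \<epsilon>^2)
       \<and> (\<lambda>\<epsilon>. phi2_dot (scale_theta \<epsilon> \<Theta>) A J x - Phi3cand (scale_theta \<epsilon> \<Theta>) A J x)
           \<in> O[at 0](\<lambda>\<epsilon>. \<epsilon>^2)"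
proof -
  obtain R where "isCont R 0" and phi2_dot:
    "\<And>\<epsilon>. phi2_dot (scale_theta \<epsilon> \<Theta>) A J x = Phi3cand (scale_theta \<epsilon> \<Theta>) A J x + \<epsilon>\<^sup>2 * R \<epsilon>"
    using phi2_dot_expansion[OF antisym no_time smoothA smoothJ] by blast
  have "divEB (scale_theta \<epsilon> \<Theta>) A J x = Phi3cand (scale_theta \<epsilon> \<Theta>) A J x" for \<epsilon>
    by (intro divEB_eq_Phi3cand scale_theta_antisym scale_theta_no_time antisym no_time smoothA smoothJ)
  then have "(\<lambda>\<epsilon>. divEB (scale_theta \<epsilon> \<Theta>) A J x - phi2_dot (scale_theta \<epsilon> \<Theta>) A J x)
      = (\<lambda>\<epsilon>. \<epsilon>\<^sup>2 * (- R \<epsilon>))"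
    by (simp add: phi2_dot)
  moreover have "isCont (\<lambda>\<epsilon>. - R \<epsilon>) 0"
    using \<open>isCont R 0\<close> by (rule continuous_minus)
  ultimately show ?thesis
    using continuous_mult_square_bigo[OF \<open>isCont R 0\<close>] continuous_mult_square_bigo
    by (simp add: phi2_dot)
qed

end
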